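(* Let $n=4k$ with $k\ge2$, and let $\tau$ be an integer with $1\le\tau\le k$. Let $u_1,\ldots,u_k\in\mathbb{F}_{2^{2k}}^*$ be such that $u_iu_j^{2^k}\in\mathbb{F}_{2^k}^*$ for all $1\le i<j\le k$. Let $F(X_1,\ldots,X_\tau)$ be a reduced polynomial in $\mathbb{F}_2[X_1,\ldots,X_\tau]$ of algebraic degree $d$, let $\omega$ be a generator of the cyclic group $U=\{x\in\mathbb{F}_{2^{2k}}: x^{2^k+1}=1\}$, and let $\{i_1,\ldots,i_\tau\}\subseteq\{1,\ldots,k\}$. Then $H(x)=\mathrm{Tr}^n_k(\omega x^{2^k+1})+F(\mathrm{Tr}^n_1(u_{i_1}x),\ldots,\mathrm{Tr}^n_1(u_{i_\tau}x))$ is a vectorial bent $(n,k)$-function. Furthermore, if $u_1,\ldots,u_k$ are linearly independent over $\mathbb{F}_2$ and $d\ge2$, then $H$ has algebraic degree $d$.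
   Context: $\mathrm{Tr}^m_1(x)=\sum_{i=0}^{m-1}x^{2^i}$, $\mathrm{Tr}^{4k}_k(x)=x+x^{2^k}+x^{2^{2k}}+x^{2^{3k}}$. An $(n,k)$-function $H$ is vectorial bent if $\mathrm{Tr}^k_1(\lambda H(x))$ is bent for every $\lambda\in\mathbb{F}_{2^k}^*$ (bent: $|\sum_x(-1)^{f(x)+\mathrm{Tr}^n_1(ax)}|=2^{n/2}$ for all $a$). A reduced polynomial is a multilinear polynomial over $\mathbb{F}_2$; its algebraic degree is the largest size of a monomial with nonzero coefficient. The algebraic degree of a vectorial function is the maximal algebraic degree of its coordinate Boolean functions. *)

theory Defs
  imports Complex_Main
begin

text \<open>The field F_{2^n} is modelled by a finite field type 'a with CARD('a) = 2^n;
  the subfield F_{2^m} is the set of fixed points of x \<mapsto> x^(2^m).\<close>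

definition subfield :: "nat \<Rightarrow> 'a::field set" where
  "subfield m = {x. x ^ (2 ^ m) = x}"

definition trace :: "nat \<Rightarrow> 'a::comm_ring_1 \<Rightarrow> 'a" where
  "trace m x = (\<Sum>i<m. x ^ (2 ^ i))"

definition trace4 :: "nat \<Rightarrow> 'a::comm_ring_1 \<Rightarrow> 'a" where
  "trace4 k x = x + x ^ (2 ^ k) + x ^ (2 ^ (2 * k)) + x ^ (2 ^ (3 * k))"

text \<open>(-1)^y for y in F_2 (embedded in 'a as 0/1).\<close>
definition chi :: "'a::zero \<Rightarrow> real" where
  "chi y = (if y = 0 then 1 else -1)"

definition is_bent :: "nat \<Rightarrow> ('a::{field,finite} \<Rightarrow> 'a) \<Rightarrow> bool" where
  "is_bent n f \<longleftrightarrow>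
     (\<forall>a::'a. \<bar>\<Sum>x\<in>UNIV. chi (f x + trace n (a * x))\<bar> = 2 powr (real n / 2))"

definition vectorial_bent :: "nat \<Rightarrow> nat \<Rightarrow> ('a::{field,finite} \<Rightarrow> 'a) \<Rightarrow> bool" where
  "vectorial_bent n k H \<longleftrightarrow>
     (\<forall>l. l \<in> subfield k \<and> l \<noteq> 0 \<longrightarrow> is_bent n (\<lambda>x. trace k (l * H x)))"

text \<open>Reduced (multilinear) polynomials over F_2 are represented by their set of
  monomials (each monomial = set of variable indices) having coefficient 1.\<close>
definition eval_rpoly :: "nat set set \<Rightarrow> (nat \<Rightarrow> 'a::comm_ring_1) \<Rightarrow> 'a" where
  "eval_rpoly S y = (\<Sum>M\<in>S. \<Prod>i\<in>M. y i)"

definition rdeg :: "nat set set \<Rightarrow> nat" where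
  "rdeg S = (if S = {} then 0 else Max (card ` S))"

definition lin_indep_F2 :: "(nat \<Rightarrow> 'a::comm_ring_1) \<Rightarrow> nat set \<Rightarrow> bool" where
  "lin_indep_F2 u I \<longleftrightarrow> (\<forall>A\<subseteq>I. (\<Sum>i\<in>A. u i) = 0 \<longrightarrow> A = {})"

definition F2_basis :: "nat \<Rightarrow> (nat \<Rightarrow> 'a::comm_ring_1) \<Rightarrow> 'a set \<Rightarrow> bool" where
  "F2_basis m b V \<longleftrightarrow> bij_betw (\<lambda>X. \<Sum>i\<in>X. b i) (Pow {..<m}) V"

text \<open>S is the algebraic normal form (reduced polynomial in x_0..x_{m-1}) of the
  Boolean function f w.r.t. the basis b; a point x in F_2^m is given by its support X.\<close>
definition anf_rep :: "nat \<Rightarrow> (nat \<Rightarrow> 'a::comm_ring_1) \<Rightarrow> ('a \<Rightarrow> 'a) \<Rightarrow> nat set set \<Rightarrow> bool" where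
  "anf_rep m b f S \<longleftrightarrow> S \<subseteq> Pow {..<m} \<and>
     (\<forall>X\<in>Pow {..<m}. f (\<Sum>i\<in>X. b i) = of_nat (card {M\<in>S. M \<subseteq> X}))"

definition bool_alg_degree :: "nat \<Rightarrow> ('a::{field,finite} \<Rightarrow> 'a) \<Rightarrow> nat" where
  "bool_alg_degree n f =
     (let b = (SOME b. F2_basis n b (UNIV::'a set)) in rdeg (THE S. anf_rep n b f S))"

definition coord :: "nat \<Rightarrow> (nat \<Rightarrow> 'a::comm_ring_1) \<Rightarrow> nat \<Rightarrow> 'a \<Rightarrow> 'a" where
  "coord k c j y = (if j \<in> (THE X. X \<subseteq> {..<k} \<and> (\<Sum>i\<in>X. c i) = y) then 1 else 0)"

definition vec_alg_degree :: "nat \<Rightarrow> nat \<Rightarrow> ('a::{field,finite} \<Rightarrow> 'a) \<Rightarrow> nat" where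
  "vec_alg_degree n k H =
     (let c = (SOME c. F2_basis k c (subfield k :: 'a set))
      in Max ((\<lambda>j. bool_alg_degree n (\<lambda>x. coord k c j (H x))) ` {..<k}))"

definition unit_circle :: "nat \<Rightarrow> 'a::field set" where
  "unit_circle k = {x \<in> subfield (2 * k). x ^ (2 ^ k + 1) = 1}"

end

theory Submission
  imports Defs "HOL-Number_Theory.Residues" "HOL-Computational_Algebra.Polynomial"
begin

text \<open>
  Write \<open>q = 2^k\<close>, \<open>n = 4k\<close> and \<open>G(x) = F(Tr(u_i x))\<close>. For \<open>\<lambda> \<in> F_q^*\<close> the component
  \<open>Tr_k(\<lambda> H(x))\<close> equals \<open>Tr_n(\<lambda>\<omega> x^(q+1)) + Tr_k(\<lambda>) G(x)\<close>, and it is bent if all its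
  derivatives are balanced. Up to a constant, the derivative of the quadratic part in direction
  \<open>e\<close> is the linear form \<open>x \<mapsto> Tr_n(L(e) x)\<close> with \<open>L\<close> injective because \<open>\<omega> \<noteq> 1\<close>. The hypothesis on the
  \<open>u_i\<close> puts them all on the line \<open>u_1 F_q\<close>, so \<open>(-1)^G\<close> is a combination of characters indexed
  by that line. If \<open>L(e)\<close> lies on the line, then \<open>e\<close> is trace-orthogonal to the whole line and
  \<open>G\<close> is \<open>e\<close>-periodic; otherwise the autocorrelation of \<open>(-1)^G\<close> is orthogonal to the character
  of \<open>L(e)\<close>. Either way the derivative is balanced.

  For the degree, every coordinate of \<open>Tr^n_k(\<omega> x^(q+1))\<close> is quadratic and \<open>G\<close> has degree at
  most \<open>d\<close>. Conversely, a coordinate in which \<open>1\<close> has a nonzero entry differs from \<open>G\<close> by a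
  quadratic function: for \<open>d \<ge> 3\<close>, points dual to the independent \<open>u_i\<close> span a cube on which
  the \<open>d\<close>-th derivative of \<open>G\<close> is the top coefficient of \<open>F\<close>, and for \<open>d = 2\<close> a period of \<open>G\<close>
  isolates a nonvanishing second derivative of the quadratic part.
\<close>

section \<open>Signs, traces and subfields\<close>

lemma chi_mult_self [simp]: "chi a * chi a = 1"
  and chi_0 [simp]: "chi 0 = 1"
  by (simp_all add: chi_def)

definition F2 :: "'a::{zero,one} set" where
  "F2 = {0, 1}"

lemma F2_iff: "y \<in> F2 \<longleftrightarrow> y = 0 \<or> y = 1"
  by (simp add: F2_def)

lemma zero_in_F2 [simp]: "0 \<in> F2" and one_in_F2 [simp]: "1 \<in> F2"
  by (simp_all add: F2_def)

lemma F2_mult: "a \<in> F2 \<Longrightarrow> b \<in> F2 \<Longrightarrow> (a::'a::{mult_zero,monoid_mult}) * b \<in> F2"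
  by (auto simp: F2_def)

lemma prod_in_F2: "(\<And>j. j \<in> A \<Longrightarrow> f j \<in> F2) \<Longrightarrow> (\<Prod>j\<in>A. f j :: 'a::comm_semiring_1) \<in> F2"
  by (induction A rule: infinite_finite_induct) (auto intro: F2_mult)

lemma card_roots_sparse_poly_le:
  fixes c :: "nat \<Rightarrow> 'a::idom"
  assumes "finite E" "D \<in> E" "c D \<noteq> 0" "\<forall>i\<in>E. i \<le> D"
  shows "card {x. (\<Sum>i\<in>E. c i * x ^ i) = 0} \<le> D"
proof -
  define p where "p = (\<Sum>i\<in>E. monom (c i) i)"
  have poly_p: "poly p x = (\<Sum>i\<in>E. c i * x ^ i)" for x
    by (simp add: p_def poly_sum poly_monom)
  have "coeff p D = c D"
    using assms by (simp add: p_def coeff_sum)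
  then have "p \<noteq> 0"
    using assms by auto
  moreover have "degree p \<le> D"
    unfolding p_def using assms by (intro degree_sum_le) (auto intro: order.trans[OF degree_monom_le])
  ultimately show ?thesis
    using card_poly_roots_bound[of p] by (simp add: poly_p)
qed

lemma F2_power_two_power: "a \<in> F2 \<Longrightarrow> (a::'a::comm_ring_1) ^ 2 ^ i = a"
  by (auto simp: F2_def power_0_left)

lemma chi_prod_F2:
  fixes f :: "'b \<Rightarrow> 'a::field"
  assumes "\<And>j. j \<in> A \<Longrightarrow> f j \<in> F2"
  shows "chi (\<Prod>j\<in>A. f j) = 1 - 2 * (\<Prod>j\<in>A. (1 - chi (f j)) / 2)"
  using assms
proof (induction A rule: infinite_finite_induct)
  case (insert a A)
  then have "(\<Prod>j\<in>A. f j) \<in> F2" "f a \<in> F2"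
    by (auto intro: prod_in_F2)
  with insert show ?case
    by (auto simp: F2_def chi_def)
qed (simp_all add: chi_def)

lemma trace_0 [simp]: "trace m (0::'a::comm_ring_1) = 0"
  by (simp add: trace_def power_0_left)

lemma trace_mult_F2: "g \<in> F2 \<Longrightarrow> trace m (l * g) = g * trace m (l::'a::comm_ring_1)"
  by (auto simp: F2_def trace_def power_0_left)

lemma subfield_mult: "x \<in> subfield m \<Longrightarrow> y \<in> subfield m \<Longrightarrow> (x::'a::field) * y \<in> subfield m"
  by (simp add: subfield_def power_mult_distrib)

lemma subfield_divide: "x \<in> subfield m \<Longrightarrow> y \<in> subfield m \<Longrightarrow> (x::'a::field) / y \<in> subfield m"
  by (simp add: subfield_def power_divide)

lemma subfield_power: "x \<in> subfield m \<Longrightarrow> (x::'a::field) ^ j \<in> subfield m"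
  by (simp add: subfield_def flip: power_mult) (metis mult.commute power_mult)

lemma F2_subset_subfield: "F2 \<subseteq> (subfield m :: 'a::field set)"
  by (auto simp: F2_def subfield_def power_0_left)

lemma subfield_power_iterate: "x \<in> subfield m \<Longrightarrow> (x::'a::field) ^ 2 ^ (m * j) = x"
  by (induction j) (simp_all add: subfield_def power_add power_mult)

lemma subfield_mono: "x \<in> subfield m \<Longrightarrow> (x::'a::field) \<in> subfield (m * j)"
  by (simp add: subfield_def subfield_power_iterate)

lemma power_two_power_power_two_power: "((y::'a::monoid_mult) ^ 2 ^ a) ^ 2 ^ b = y ^ 2 ^ (a + b)"
  by (simp add: power_add power_mult)

lemma trace_subfield_multiple:
  assumes "(y::'a::field) \<in> subfield m"
  shows "trace (j * m) y = of_nat j * trace m y"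
proof -
  have "trace (j * m) y = (\<Sum>a<j. \<Sum>i\<in>{a * m..<a * m + m}. y ^ 2 ^ i)"
    by (simp add: trace_def sum.nat_group)
  also have "\<dots> = (\<Sum>a<j. trace m y)"
  proof (rule sum.cong[OF refl])
    fix a
    have "y ^ 2 ^ (a * m + i) = y ^ 2 ^ i" for i
      using subfield_power_iterate[OF assms, of a]
      by (metis power_two_power_power_two_power mult.commute add.commute)
    then show "(\<Sum>i\<in>{a * m..<a * m + m}. y ^ 2 ^ i) = trace m y"
      by (simp add: trace_def sum.atLeastLessThan_shift_0 atLeast0LessThan)
  qed
  finally show ?thesis
    by simp
qed

lemma trace4_eq_sum: "trace4 k y = (\<Sum>j<4. y ^ 2 ^ (j * k))"
  by (simp add: trace4_def eval_nat_numeral algebra_simps)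

lemma trace4_mult_subfield:
  assumes "l \<in> subfield k"
  shows "trace4 k (l * z) = l * trace4 k (z::'a::field)"
  using subfield_power_iterate[OF assms, of 2] subfield_power_iterate[OF assms, of 3] assms
  by (simp add: trace4_def subfield_def power_mult_distrib distrib_left mult.commute)

lemma trace4_0 [simp]: "trace4 k (0::'a::comm_ring_1) = 0"
  by (simp add: trace4_def power_0_left)

lemma norm_in_subfield:
  assumes "u \<in> subfield (2 * k)"
  shows "(u::'a::field) ^ (2 ^ k + 1) \<in> subfield k"
proof -
  have "(u ^ 2 ^ k) ^ 2 ^ k = u"
    using assms by (simp add: subfield_def power_two_power_power_two_power mult_2)
  then have "(u ^ (2 ^ k + 1)) ^ 2 ^ k = u * u ^ 2 ^ k"
    by (simp add: power_add power_mult_distrib)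
  then show ?thesis
    by (simp add: subfield_def power_add mult.commute)
qed

definition F2_subspace :: "'a::monoid_add set \<Rightarrow> bool" where
  "F2_subspace V \<longleftrightarrow> 0 \<in> V \<and> (\<forall>a\<in>V. \<forall>b\<in>V. a + b \<in> V)"

lemma sum_in_F2_subspace:
  "F2_subspace V \<Longrightarrow> (\<And>i. i \<in> X \<Longrightarrow> f i \<in> V) \<Longrightarrow> (\<Sum>i\<in>X. f i :: 'a::comm_monoid_add) \<in> V"
  by (induction X rule: infinite_finite_induct) (auto simp: F2_subspace_def)

lemma card_roots_of_unity_le:
  assumes "0 < D"
  shows "card {x::'a::field. x ^ D = 1} \<le> D"
proof -
  have "{x::'a. (\<Sum>i\<in>{0, D}. (if i = 0 then -1 else 1) * x ^ i) = 0} = {x. x ^ D = 1}"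
    using assms by auto
  moreover have "card {x::'a. (\<Sum>i\<in>{0, D}. (if i = 0 then -1 else 1) * x ^ i) = 0} \<le> D"
    using assms by (intro card_roots_sparse_poly_le) auto
  ultimately show ?thesis
    by simp
qed

locale char2 =
  fixes field_type :: "'a::field itself"
  assumes char_two: "(1::'a) + 1 = 0"
begin

lemma add_self [simp]: "(x::'a) + x = 0"
  by (metis char_two distrib_left mult.right_neutral mult_zero_right)

lemma add_self_left [simp]: "(x::'a) + (x + y) = y"
  by (simp flip: add.assoc)

lemma add_eq_iff_eq_add: "(a::'a) + x = c \<longleftrightarrow> x = a + c"
  by (metis add_self_left)

lemma numeral_2_eq_0 [simp]: "(2::'a) = 0"
  by (metis char_two one_add_one)

lemma uminus_eq_self [simp]: "- (x::'a) = x"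
  by (simp add: neg_eq_iff_add_eq_0)

lemma add_eq_0_iff_eq: "(a::'a) + b = 0 \<longleftrightarrow> a = b"
  by (metis eq_neg_iff_add_eq_0 uminus_eq_self)

lemma power_two_power_add: "((x::'a) + y) ^ 2 ^ i = x ^ 2 ^ i + y ^ 2 ^ i"
proof (induction i)
  case (Suc i)
  have "(x + y) ^ 2 ^ Suc i = (x ^ 2 ^ i + y ^ 2 ^ i) ^ 2"
    by (simp only: power_Suc2 power_mult Suc)
  also have "\<dots> = x ^ 2 ^ Suc i + y ^ 2 ^ Suc i"
    by (simp only: power2_sum power_Suc2 power_mult numeral_2_eq_0 mult_zero_left mult_zero_left add_0_right)
  finally show ?case .
qed simp

lemma power_two_power_sum: "(\<Sum>j\<in>A. f j :: 'a) ^ 2 ^ i = (\<Sum>j\<in>A. f j ^ 2 ^ i)"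
  by (induction A rule: infinite_finite_induct) (simp_all add: power_two_power_add power_0_left)

lemma F2_iff_power2_eq: "(y::'a) \<in> F2 \<longleftrightarrow> y ^ 2 = y"
proof
  assume "y ^ 2 = y"
  then show "y \<in> F2"
    by (metis F2_iff mult_cancel_left mult.right_neutral power2_eq_square)
qed (auto simp: F2_def power2_eq_square)

lemma F2_add: "a \<in> F2 \<Longrightarrow> b \<in> F2 \<Longrightarrow> (a::'a) + b \<in> F2"
  by (auto simp: F2_def)

lemma sum_in_F2: "(\<And>j. j \<in> A \<Longrightarrow> f j \<in> F2) \<Longrightarrow> (\<Sum>j\<in>A. f j :: 'a) \<in> F2"
  by (induction A rule: infinite_finite_induct) (auto intro: F2_add)

lemma chi_add: "a \<in> F2 \<Longrightarrow> b \<in> F2 \<Longrightarrow> chi ((a::'a) + b) = chi a * chi b"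
  by (auto simp: F2_def chi_def)

lemma chi_add_1: "a \<in> F2 \<Longrightarrow> chi ((a::'a) + 1) = - chi a"
  by (auto simp: F2_def chi_def)

lemma chi_sum: "(\<And>j. j \<in> A \<Longrightarrow> f j \<in> F2) \<Longrightarrow> chi (\<Sum>j\<in>A. f j :: 'a) = (\<Prod>j\<in>A. chi (f j))"
  by (induction A rule: infinite_finite_induct) (auto simp: chi_add sum_in_F2)

lemma subfield_add: "x \<in> subfield m \<Longrightarrow> y \<in> subfield m \<Longrightarrow> (x::'a) + y \<in> subfield m"
  by (simp add: subfield_def power_two_power_add)

lemma F2_subspace_subfield: "F2_subspace (subfield m :: 'a set)"
  using F2_subset_subfield[of m] by (auto simp: F2_subspace_def subfield_add)

lemma trace_add: "trace m ((x::'a) + y) = trace m x + trace m y"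
  by (simp add: trace_def power_two_power_add sum.distrib)

lemma trace_sum: "trace m (\<Sum>j\<in>A. f j :: 'a) = (\<Sum>j\<in>A. trace m (f j))"
  by (induction A rule: infinite_finite_induct) (simp_all add: trace_add)

lemma trace_power2: "trace m ((y::'a) ^ 2) = (trace m y) ^ 2"
  by (simp add: trace_def power_two_power_sum[where i = 1, simplified] flip: power_mult)
    (simp add: mult.commute)

lemma trace_in_F2:
  assumes "(y::'a) \<in> subfield m"
  shows "trace m y \<in> F2"
proof -
  have "(trace m y) ^ 2 = (\<Sum>i<m. y ^ 2 ^ Suc i)"
    by (simp add: trace_def power_two_power_sum[where i = 1, simplified] flip: power_mult)
      (simp add: mult.commute)
  also have "\<dots> = trace m y"
    using assms sum.lessThan_Suc_shift[of "\<lambda>i. y ^ 2 ^ i" m] sum.lessThan_Suc[of "\<lambda>i. y ^ 2 ^ i" m]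
    by (simp add: trace_def subfield_def)
  finally show ?thesis
    by (simp add: F2_iff_power2_eq)
qed

lemma trace4_add: "trace4 k ((x::'a) + y) = trace4 k x + trace4 k y"
  by (simp add: trace4_def power_two_power_add algebra_simps)

lemma trace4_sum: "trace4 k (\<Sum>i\<in>I. f i :: 'a) = (\<Sum>i\<in>I. trace4 k (f i))"
  by (induction I rule: infinite_finite_induct) (simp_all add: trace4_add)

lemma trace_trace4:
  assumes "l \<in> subfield k"
  shows "trace k (l * trace4 k (y::'a)) = trace (4 * k) (l * y)"
proof -
  have "trace k (l * trace4 k y) = (\<Sum>j<4. trace k ((l * y) ^ 2 ^ (j * k)))"
    using subfield_power_iterate[OF assms]
    by (simp add: trace4_eq_sum sum_distrib_left power_mult_distrib trace_sum mult.commute)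
  also have "\<dots> = (\<Sum>j<4. \<Sum>i<k. (l * y) ^ 2 ^ (j * k + i))"
    by (simp only: trace_def power_two_power_power_two_power)
  also have "\<dots> = (\<Sum>j<4. \<Sum>i\<in>{j * k..<j * k + k}. (l * y) ^ 2 ^ i)"
    by (simp add: sum.atLeastLessThan_shift_0 atLeast0LessThan comp_def)
  also have "\<dots> = trace (4 * k) (l * y)"
    by (simp only: trace_def sum.nat_group)
  finally show ?thesis .
qed

lemma sum_symmetric_difference:
  assumes "finite A" "finite B"
  shows "(\<Sum>i\<in>A. f i) + (\<Sum>i\<in>B. f i) = (\<Sum>i\<in>(A - B) \<union> (B - A). f i :: 'a)"
proof -
  have "sum f A = sum f (A \<inter> B) + sum f (A - B)"
    by (rule sum.Int_Diff[OF assms(1)])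
  moreover have "sum f B = sum f (A \<inter> B) + sum f (B - A)"
    using sum.Int_Diff[OF assms(2), of f A] by (simp only: Int_commute)
  moreover have "sum f ((A - B) \<union> (B - A)) = sum f (A - B) + sum f (B - A)"
    using assms by (intro sum.union_disjoint) auto
  ultimately show ?thesis
    by (simp add: add.assoc add.left_commute[of "sum f (A - B)"])
qed

end

section \<open>Bases over the prime field\<close>

lemma sum_fun_upd:
  assumes "finite X"
  shows "(\<Sum>i\<in>X. (b(j := x)) i) = (\<Sum>i\<in>X - {j}. b i) + (if j \<in> X then x else 0)"
proof -
  have "(\<Sum>i\<in>X - {j}. (b(j := x)) i) = (\<Sum>i\<in>X - {j}. b i)"
    by (intro sum.cong) auto
  with assms show ?thesis
    by (cases "j \<in> X") (simp_all add: sum.remove add.commute Diff_insert_absorb)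
qed

lemma F2_basis_span: "F2_basis m b V \<Longrightarrow> (\<lambda>X. \<Sum>i\<in>X. b i) ` Pow {..<m} = V"
  and F2_basis_inj: "F2_basis m b V \<Longrightarrow> inj_on (\<lambda>X. \<Sum>i\<in>X. b i) (Pow {..<m})"
  by (simp_all add: F2_basis_def bij_betw_def)

lemma F2_basis_vector_in:
  assumes "F2_basis m b V" "j < m"
  shows "b j \<in> V"
proof -
  have "(\<Sum>i\<in>{j}. b i) \<in> V"
    using F2_basis_span[OF assms(1)] assms(2) by blast
  then show ?thesis
    by simp
qed

lemma F2_basis_obtain:
  assumes "F2_basis m b V" "y \<in> V"
  obtains X where "X \<subseteq> {..<m}" "y = (\<Sum>i\<in>X. b i)"
  using assms F2_basis_span[of m b V] by (metis PowD imageE)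

lemma coord_F2_basis_sum:
  assumes "F2_basis m b V" "X \<subseteq> {..<m}"
  shows "coord m b j (\<Sum>i\<in>X. b i) = (if j \<in> X then 1 else 0)"
proof -
  have "(THE Y. Y \<subseteq> {..<m} \<and> (\<Sum>i\<in>Y. b i) = (\<Sum>i\<in>X. b i)) = X"
    using assms F2_basis_inj[OF assms(1)] by (intro the_equality) (auto dest: inj_onD)
  then show ?thesis
    by (simp add: coord_def)
qed

lemma coord_in_F2: "coord m b j y \<in> F2"
  by (simp add: coord_def)

lemma coord_0: "F2_basis m b V \<Longrightarrow> coord m b j 0 = 0"
  using coord_F2_basis_sum[of m b V "{}"] by simp

lemma coord_basis_vector: "F2_basis m b V \<Longrightarrow> j < m \<Longrightarrow> coord m b j (b j) = 1"
  using coord_F2_basis_sum[of m b V "{j}"] by simp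

lemma F2_basis_expansion:
  assumes "F2_basis m b V" "y \<in> V"
  shows "y = (\<Sum>i<m. coord m b i y * b i)"
proof -
  obtain X where X: "X \<subseteq> {..<m}" "y = (\<Sum>i\<in>X. b i)"
    using F2_basis_obtain[OF assms] .
  then have "(\<Sum>i<m. coord m b i y * b i) = (\<Sum>i<m. if i \<in> X then b i else 0)"
    using coord_F2_basis_sum[OF assms(1) X(1)] by (intro sum.cong) auto
  also have "\<dots> = y"
    using X by (simp add: sum.If_cases Int_absorb1)
  finally show ?thesis ..
qed

lemma exists_coord_eq_1:
  assumes "F2_basis m b V" "y \<in> V" "y \<noteq> 0"
  shows "\<exists>j<m. coord m b j y = 1"
proof -
  obtain X where X: "X \<subseteq> {..<m}" "y = (\<Sum>i\<in>X. b i)"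
    using F2_basis_obtain[OF assms(1,2)] .
  with assms(3) obtain j where "j \<in> X"
    by fastforce
  with X show ?thesis
    using coord_F2_basis_sum[OF assms(1) X(1)] by auto
qed

lemma lin_indep_F2_reindex:
  assumes "lin_indep_F2 u I" "inj_on \<iota> J" "\<iota> ` J \<subseteq> I" "A \<subseteq> J" "A \<noteq> {}"
  shows "(\<Sum>j\<in>A. u (\<iota> j)) \<noteq> 0"
proof -
  have "(\<Sum>j\<in>A. u (\<iota> j)) = (\<Sum>i\<in>\<iota> ` A. u i)"
    using assms(2,4) by (simp add: sum.reindex inj_on_subset)
  moreover have "\<iota> ` A \<subseteq> I" "\<iota> ` A \<noteq> {}"
    using assms(3-5) by auto
  ultimately show ?thesis
    using assms(1) unfolding lin_indep_F2_def by metis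
qed

context char2
begin

lemma coord_add:
  assumes B: "F2_basis m b V" and "y \<in> V" "y' \<in> V"
  shows "coord m b j ((y::'a) + y') = coord m b j y + coord m b j y'"
proof -
  obtain X Y where X: "X \<subseteq> {..<m}" "y = (\<Sum>i\<in>X. b i)" and Y: "Y \<subseteq> {..<m}" "y' = (\<Sum>i\<in>Y. b i)"
    using F2_basis_obtain[OF B] assms by metis
  then have "y + y' = (\<Sum>i\<in>(X - Y) \<union> (Y - X). b i)"
    using sum_symmetric_difference finite_subset[OF _ finite_lessThan] by metis
  moreover have "(X - Y) \<union> (Y - X) \<subseteq> {..<m}"
    using X Y by auto
  ultimately show ?thesis
    using coord_F2_basis_sum[OF B] X Y by auto
qed

lemma coord_sum:
  assumes "F2_basis m b V" "F2_subspace V" "\<And>i. i \<in> I \<Longrightarrow> y i \<in> V"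
  shows "coord m b j (\<Sum>i\<in>I. y i :: 'a) = (\<Sum>i\<in>I. coord m b j (y i))"
  using assms(3)
proof (induction I rule: infinite_finite_induct)
  case (insert i I)
  then have "(\<Sum>i\<in>I. y i) \<in> V"
    using assms(2) by (auto intro: sum_in_F2_subspace)
  with insert show ?case
    using coord_add[OF assms(1)] by simp
qed (use coord_0[OF assms(1)] in simp_all)

lemma coord_mult_F2:
  "F2_basis m b V \<Longrightarrow> \<beta> \<in> F2 \<Longrightarrow> coord m b j (\<beta> * y) = \<beta> * coord m b j (y::'a)"
  using coord_0 by (auto simp: F2_def)

lemma F2_basis_extend:
  fixes b :: "nat \<Rightarrow> 'a"
  assumes inj: "inj_on (\<lambda>X. \<Sum>i\<in>X. b i) (Pow {..<j})"
    and x: "x \<notin> (\<lambda>X. \<Sum>i\<in>X. b i) ` Pow {..<j}"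
  shows "inj_on (\<lambda>X. \<Sum>i\<in>X. (b(j := x)) i) (Pow {..<Suc j})"
proof (rule inj_onI)
  fix X Y
  assume XY: "X \<in> Pow {..<Suc j}" "Y \<in> Pow {..<Suc j}"
    and eq: "(\<Sum>i\<in>X. (b(j := x)) i) = (\<Sum>i\<in>Y. (b(j := x)) i)"
  have X': "X - {j} \<in> Pow {..<j}" and Y': "Y - {j} \<in> Pow {..<j}"
    using XY by auto
  have fin: "finite X" "finite Y" "finite (X - {j})" "finite (Y - {j})"
    using XY finite_subset by auto
  have eq': "(\<Sum>i\<in>X - {j}. b i) + (if j \<in> X then x else 0) = (\<Sum>i\<in>Y - {j}. b i) + (if j \<in> Y then x else 0)"
    using eq by (simp only: sum_fun_upd fin)
  show "X = Y"
  proof (cases "j \<in> X \<longleftrightarrow> j \<in> Y")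
    case True
    then have "(\<Sum>i\<in>X - {j}. b i) = (\<Sum>i\<in>Y - {j}. b i)"
      using eq' by (cases "j \<in> X") simp_all
    then have "X - {j} = Y - {j}"
      using inj X' Y' by (auto dest: inj_onD)
    with True show ?thesis
      by blast
  next
    case False
    then have "x = (\<Sum>i\<in>X - {j}. b i) + (\<Sum>i\<in>Y - {j}. b i)"
      using eq' by (cases "j \<in> X") (simp_all add: add_eq_iff_eq_add add_ac)
    also have "\<dots> = (\<Sum>i\<in>((X - {j}) - (Y - {j})) \<union> ((Y - {j}) - (X - {j})). b i)"
      using fin(3,4) by (rule sum_symmetric_difference)
    finally have "x \<in> (\<lambda>X. \<Sum>i\<in>X. b i) ` Pow {..<j}"
      using X' Y' by auto
    with x show ?thesis
      by contradiction
  qed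
qed

lemma F2_basis_exists:
  assumes V: "F2_subspace (V::'a set)" and card_V: "card V = 2 ^ m"
  shows "\<exists>b. F2_basis m b V"
proof -
  let ?span = "\<lambda>b j. (\<lambda>X. \<Sum>i\<in>X. b i) ` Pow {..<j}"
  have span_in_V: "?span b j \<subseteq> V" if "\<forall>i<j. b i \<in> V" for b j
    using that by (auto intro!: sum_in_F2_subspace[OF V])
  have card_span: "card (?span b j) = 2 ^ j" if "inj_on (\<lambda>X. \<Sum>i\<in>X. b i) (Pow {..<j})" for b j
    using card_image[OF that] by (simp add: card_Pow)
  have "\<exists>b. (\<forall>i<j. b i \<in> V) \<and> inj_on (\<lambda>X. \<Sum>i\<in>X. b i) (Pow {..<j})" if "j \<le> m" for j
    using that
  proof (induction j)
    case 0
    show ?case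
      by (auto simp: inj_on_def)
  next
    case (Suc j)
    then obtain b where bV: "\<forall>i<j. b i \<in> V" and inj: "inj_on (\<lambda>X. \<Sum>i\<in>X. b i) (Pow {..<j})"
      by auto
    have "card (?span b j) < card V"
      using card_span[OF inj] card_V Suc.prems by simp
    then have "?span b j \<noteq> V"
      by auto
    then obtain x where "x \<in> V" "x \<notin> ?span b j"
      using span_in_V[OF bV] by blast
    then show ?case
      using bV F2_basis_extend[OF inj] by (intro exI[of _ "b(j := x)"]) (auto simp: less_Suc_eq)
  qed
  then obtain b where bV: "\<forall>i<m. b i \<in> V" and inj: "inj_on (\<lambda>X. \<Sum>i\<in>X. b i) (Pow {..<m})"
    by blast
  have "finite V"
    using card_V by (intro card_ge_0_finite) simp
  then have "?span b m = V"
    using span_in_V[OF bV] card_span[OF inj] card_V by (intro card_subset_eq) auto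
  with inj show ?thesis
    unfolding F2_basis_def bij_betw_def by blast
qed

end

section \<open>Finite fields of order \<open>2 ^ n\<close>\<close>

lemma finite_field_power_card:
  fixes x :: "'a::{field,finite}"
  shows "x ^ card (UNIV :: 'a set) = x"
proof (cases "x = 0")
  case False
  let ?U = "UNIV - {0::'a}"
  have "bij_betw (\<lambda>y. x * y) ?U ?U"
    using False by (auto simp: bij_betw_def inj_on_def intro!: image_eqI[where x = "y / x" for y])
  then have "(\<Prod>y\<in>?U. x * y) = (\<Prod>y\<in>?U. y)"
    using prod.reindex_bij_betw[of "\<lambda>y. x * y" ?U ?U id] by simp
  moreover have "(\<Prod>y\<in>?U. x * y) = x ^ card ?U * (\<Prod>y\<in>?U. y)"
    by (simp add: prod.distrib)
  moreover have "(\<Prod>y\<in>?U. y) \<noteq> 0"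
    by simp
  ultimately have "x ^ card ?U = 1"
    by simp
  moreover have "card (UNIV :: 'a set) = Suc (card ?U)"
    by (simp add: card_Diff_singleton card_gt_0_iff)
  ultimately show ?thesis
    by (metis power_Suc2 mult_1)
qed (simp add: card_gt_0_iff)

locale binary_field =
  fixes field_type :: "'a::{field,finite} itself" and n :: nat
  assumes card_UNIV: "card (UNIV :: 'a set) = 2 ^ n" and n_pos: "0 < n"

sublocale binary_field \<subseteq> char2
proof
  have "prime CHAR('a)"
    by (intro prime_CHAR_semidom finite_imp_CHAR_pos) simp
  moreover have "CHAR('a) dvd 2 ^ n"
    using CHAR_dvd_CARD[where 'a = 'a] card_UNIV by simp
  ultimately have "CHAR('a) = 2"
    by (intro primes_dvd_imp_eq) (auto dest: prime_dvd_power)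
  then have "of_nat 2 = (0::'a)"
    by (metis of_nat_CHAR)
  then show "(1::'a) + 1 = 0"
    by simp
qed

context binary_field
begin

lemma power_card [simp]: "(x::'a) ^ 2 ^ n = x"
  using finite_field_power_card[of x] card_UNIV by simp

lemma in_subfield_n [simp]: "(y::'a) \<in> subfield n"
  by (simp add: subfield_def)

lemma trace_power_two_power: "trace n ((y::'a) ^ 2 ^ j) = trace n y"
proof (induction j)
  case (Suc j)
  have "y ^ 2 ^ Suc j = (y ^ 2 ^ j) ^ 2"
    by (simp only: power_Suc2 power_mult)
  then have "trace n (y ^ 2 ^ Suc j) = (trace n (y ^ 2 ^ j)) ^ 2"
    by (simp only: trace_power2)
  also have "\<dots> = trace n (y ^ 2 ^ j)"
    using trace_in_F2[of "y ^ 2 ^ j" n] by (simp add: F2_iff_power2_eq)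
  finally show ?case
    using Suc by simp
qed simp

lemma card_trace_zeros_le:
  assumes "(b::'a) \<noteq> 0"
  shows "card {x. trace n (b * x) = 0} \<le> 2 ^ (n - 1)"
proof -
  have "inj_on (\<lambda>i. (2::nat) ^ i) {..<n}"
    by (auto simp: inj_on_def)
  then have "trace n (b * x) = (\<Sum>e\<in>(\<lambda>i. 2 ^ i) ` {..<n}. b ^ e * x ^ e)" for x
    by (simp add: sum.reindex trace_def power_mult_distrib)
  moreover have "card {x. (\<Sum>e\<in>(\<lambda>i. 2 ^ i) ` {..<n}. b ^ e * x ^ e) = 0} \<le> 2 ^ (n - 1)"
    using assms n_pos by (intro card_roots_sparse_poly_le) (auto intro: power_increasing)
  ultimately show ?thesis
    by simp
qed

lemma exists_trace_eq_1:
  assumes "(b::'a) \<noteq> 0"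
  shows "\<exists>x. trace n (b * x) = 1"
proof (rule ccontr)
  assume "\<nexists>x. trace n (b * x) = 1"
  then have "{x. trace n (b * x) = 0} = UNIV"
    using trace_in_F2[of _ n] by (auto simp: F2_def)
  then show False
    using card_trace_zeros_le[OF assms] card_UNIV n_pos by simp
qed

lemma character_sum_eq_0:
  assumes "(b::'a) \<noteq> 0"
  shows "(\<Sum>x\<in>UNIV. chi (trace n (b * x))) = 0"
proof -
  obtain x1 where x1: "trace n (b * x1) = 1"
    using exists_trace_eq_1[OF assms] ..
  have "(\<Sum>x\<in>UNIV. chi (trace n (b * x))) = (\<Sum>x\<in>UNIV. chi (trace n (b * (x + x1))))"
    by (rule sum.reindex_bij_witness[of _ "\<lambda>x. x + x1" "\<lambda>x. x + x1"]) auto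
  also have "\<dots> = (\<Sum>x\<in>UNIV. - chi (trace n (b * x)))"
    by (simp add: distrib_left trace_add x1 chi_add_1 trace_in_F2)
  also have "\<dots> = - (\<Sum>x\<in>UNIV. chi (trace n (b * x)))"
    by (simp add: sum_negf)
  finally show ?thesis
    by simp
qed

lemma walsh_square:
  fixes f :: "'a \<Rightarrow> 'a"
  assumes f: "\<And>x. f x \<in> F2"
  shows "(\<Sum>x\<in>UNIV. chi (f x + trace n (a * x))) ^ 2
       = (\<Sum>e\<in>UNIV. chi (trace n (a * e)) * (\<Sum>x\<in>UNIV. chi (f x) * chi (f (x + e))))"
proof -
  define g where "g x = chi (f x + trace n (a * x))" for x
  have g_eq: "g y = chi (f y) * chi (trace n (a * y))" for y
    by (simp add: g_def chi_add f trace_in_F2)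
  have "g x * g (x + e) = (chi (trace n (a * x)) * chi (trace n (a * x)))
      * (chi (trace n (a * e)) * (chi (f x) * chi (f (x + e))))" for x e
    by (simp only: g_eq distrib_left trace_add chi_add[OF trace_in_F2 trace_in_F2] in_subfield_n mult_ac)
  then have g_mult: "g x * g (x + e) = chi (trace n (a * e)) * (chi (f x) * chi (f (x + e)))" for x e
    by simp
  have "(\<Sum>y\<in>UNIV. g x * g y) = (\<Sum>e\<in>UNIV. g x * g (x + e))" for x
    by (rule sum.reindex_bij_witness[of _ "\<lambda>e. x + e" "\<lambda>y. y + x"]) (auto simp: add.commute)
  then have "(\<Sum>x\<in>UNIV. g x) ^ 2 = (\<Sum>x\<in>UNIV. \<Sum>e\<in>UNIV. g x * g (x + e))"
    by (simp add: power2_eq_square sum_product)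
  also have "\<dots> = (\<Sum>e\<in>UNIV. \<Sum>x\<in>UNIV. g x * g (x + e))"
    by (rule sum.swap)
  also have "\<dots> = (\<Sum>e\<in>UNIV. \<Sum>x\<in>UNIV. chi (trace n (a * e)) * (chi (f x) * chi (f (x + e))))"
    by (simp only: g_mult)
  finally show ?thesis
    by (simp only: g_def sum_distrib_left)
qed

lemma bent_if_derivatives_balanced:
  fixes f :: "'a \<Rightarrow> 'a"
  assumes f: "\<And>x. f x \<in> F2"
    and balanced: "\<And>e. e \<noteq> 0 \<Longrightarrow> (\<Sum>x\<in>UNIV. chi (f x) * chi (f (x + e))) = 0"
  shows "is_bent n f"
  unfolding is_bent_def
proof
  fix a :: 'a
  have "(\<Sum>x\<in>UNIV. chi (f x + trace n (a * x))) ^ 2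
      = (\<Sum>e\<in>{0}. chi (trace n (a * e)) * (\<Sum>x\<in>UNIV. chi (f x) * chi (f (x + e))))"
    unfolding walsh_square[OF f] by (intro sum.mono_neutral_right) (auto simp: balanced)
  also have "\<dots> = 2 ^ n"
    by (simp add: card_UNIV)
  also have "\<dots> = (2 powr (real n / 2)) ^ 2"
    by (simp add: power2_eq_square powr_realpow flip: powr_add)
  finally show "\<bar>\<Sum>x\<in>UNIV. chi (f x + trace n (a * x))\<bar> = 2 powr (real n / 2)"
    by (metis power2_abs power2_eq_imp_eq abs_ge_zero powr_ge_zero)
qed

lemma prod_chi_trace_add:
  fixes v y :: "nat \<Rightarrow> 'a"
  assumes "\<And>i. i \<in> A \<Longrightarrow> y i \<in> F2"
  shows "(\<Prod>i\<in>A. chi (trace n (v i * x) + y i)) = chi (\<Sum>i\<in>A. y i) * chi (trace n ((\<Sum>i\<in>A. v i) * x))"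
proof -
  have "(\<Prod>i\<in>A. chi (trace n (v i * x) + y i)) = (\<Prod>i\<in>A. chi (y i)) * (\<Prod>i\<in>A. chi (trace n (v i * x)))"
    using assms by (simp add: chi_add trace_in_F2 prod.distrib mult.commute)
  also have "\<dots> = chi (\<Sum>i\<in>A. y i) * chi (\<Sum>i\<in>A. trace n (v i * x))"
    using assms by (simp add: chi_sum trace_in_F2)
  finally show ?thesis
    by (simp add: trace_sum sum_distrib_right)
qed

lemma exists_trace_values:
  fixes v y :: "nat \<Rightarrow> 'a"
  assumes J: "finite J" and indep: "\<And>A. A \<subseteq> J \<Longrightarrow> A \<noteq> {} \<Longrightarrow> (\<Sum>i\<in>A. v i) \<noteq> 0"
    and y: "\<And>i. i \<in> J \<Longrightarrow> y i \<in> F2"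
  shows "\<exists>x. \<forall>i\<in>J. trace n (v i * x) = y i"
proof -
  \<comment> \<open>\<open>P x\<close> is nonzero exactly at the solutions; by orthogonality of characters only
    the empty subset of \<open>J\<close> contributes to \<open>\<Sum>x. P x\<close>, which is therefore \<open>2^n\<close>.\<close>
  define P where "P x = (\<Prod>i\<in>J. chi (trace n (v i * x) + y i) + 1)" for x
  have "P x = (\<Sum>A\<in>Pow J. chi (\<Sum>i\<in>A. y i) * chi (trace n ((\<Sum>i\<in>A. v i) * x)))" for x
    unfolding P_def prod_add[OF J]
  proof (rule sum.cong[OF refl])
    fix A
    assume "A \<in> Pow J"
    then show "(\<Prod>i\<in>A. chi (trace n (v i * x) + y i)) * (\<Prod>i\<in>J - A. 1)
        = chi (\<Sum>i\<in>A. y i) * chi (trace n ((\<Sum>i\<in>A. v i) * x))"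
      using y by (subst prod_chi_trace_add) auto
  qed
  then have "(\<Sum>x\<in>UNIV. P x) = (\<Sum>A\<in>Pow J. chi (\<Sum>i\<in>A. y i) * (\<Sum>x\<in>UNIV. chi (trace n ((\<Sum>i\<in>A. v i) * x))))"
    by (simp add: sum_distrib_left sum.swap[where A = UNIV])
  also have "\<dots> = (\<Sum>A\<in>Pow J. if A = {} then 2 ^ n else 0)"
    using indep by (intro sum.cong refl) (auto simp: card_UNIV character_sum_eq_0)
  also have "\<dots> = 2 ^ n"
    using J by simp
  finally have "(\<Sum>x\<in>UNIV. P x) \<noteq> 0"
    by simp
  then obtain x where "P x \<noteq> 0"
    by (meson sum.neutral)
  then have "\<forall>i\<in>J. chi (trace n (v i * x) + y i) \<noteq> -1"
    using J by (auto simp: P_def)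
  then show ?thesis
    by (auto simp: chi_def add_eq_0_iff_eq split: if_splits)
qed

end

section \<open>Spectral support\<close>

lemma sum_delta_mult: "(\<Sum>t\<in>UNIV. (if t = v then a else 0) * g t) = (a::real) * g (v::'a::finite)"
  by (simp add: if_distrib[where f = "\<lambda>z. z * _"] cong: if_cong)

context binary_field
begin

definition in_character_span :: "'a set \<Rightarrow> ('a \<Rightarrow> real) \<Rightarrow> bool" where
  "in_character_span V h \<longleftrightarrow>
     (\<exists>c. (\<forall>t. t \<notin> V \<longrightarrow> c t = 0) \<and> (\<forall>x. h x = (\<Sum>t\<in>UNIV. c t * chi (trace n (t * x)))))"

lemma chi_trace_mult: "chi (trace n (t * x)) * chi (trace n (s * x)) = chi (trace n ((t + s) * (x::'a)))"
  by (simp add: distrib_right trace_add chi_add trace_in_F2)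

lemma in_character_span_const: "0 \<in> V \<Longrightarrow> in_character_span V (\<lambda>x. a)"
  unfolding in_character_span_def by (intro exI[of _ "\<lambda>t. if t = 0 then a else 0"]) (auto simp: sum_delta_mult)

lemma in_character_span_character: "v \<in> V \<Longrightarrow> in_character_span V (\<lambda>x. chi (trace n (v * x)))"
  unfolding in_character_span_def by (intro exI[of _ "\<lambda>t. if t = v then 1 else 0"]) (auto simp: sum_delta_mult)

lemma in_character_span_add:
  assumes "in_character_span V h" "in_character_span V h'"
  shows "in_character_span V (\<lambda>x. h x + h' x)"
proof -
  obtain c c' where "\<forall>t. t \<notin> V \<longrightarrow> c t = 0" "\<forall>x. h x = (\<Sum>t\<in>UNIV. c t * chi (trace n (t * x)))"
    "\<forall>t. t \<notin> V \<longrightarrow> c' t = 0" "\<forall>x. h' x = (\<Sum>t\<in>UNIV. c' t * chi (trace n (t * x)))"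
    using assms by (auto simp: in_character_span_def)
  then show ?thesis
    unfolding in_character_span_def
    by (intro exI[of _ "\<lambda>t. c t + c' t"]) (simp add: distrib_right sum.distrib)
qed

lemma in_character_span_scale:
  assumes "in_character_span V h"
  shows "in_character_span V (\<lambda>x. a * h x)"
proof -
  obtain c where "\<forall>t. t \<notin> V \<longrightarrow> c t = 0" "\<forall>x. h x = (\<Sum>t\<in>UNIV. c t * chi (trace n (t * x)))"
    using assms by (auto simp: in_character_span_def)
  then show ?thesis
    unfolding in_character_span_def
    by (intro exI[of _ "\<lambda>t. a * c t"]) (simp add: sum_distrib_left mult.assoc)
qed

lemma in_character_span_mult:
  assumes V: "F2_subspace V" and h: "in_character_span V h" and h': "in_character_span V h'"
  shows "in_character_span V (\<lambda>x. h x * h' x)"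
proof -
  obtain c where c: "\<forall>t. t \<notin> V \<longrightarrow> c t = 0" "\<forall>x. h x = (\<Sum>t\<in>UNIV. c t * chi (trace n (t * x)))"
    using h by (auto simp: in_character_span_def)
  obtain c' where c': "\<forall>t. t \<notin> V \<longrightarrow> c' t = 0" "\<forall>x. h' x = (\<Sum>t\<in>UNIV. c' t * chi (trace n (t * x)))"
    using h' by (auto simp: in_character_span_def)
  define d where "d r = (\<Sum>t\<in>UNIV. c t * c' (r + t))" for r
  have "d r = 0" if "r \<notin> V" for r
    unfolding d_def
  proof (intro sum.neutral ballI)
    fix t
    have "t \<in> V \<Longrightarrow> r + t \<notin> V"
      using V that by (metis F2_subspace_def add_self_left add.commute)
    then show "c t * c' (r + t) = 0"
      using c(1) c'(1) by auto
  qed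
  moreover have "h x * h' x = (\<Sum>r\<in>UNIV. d r * chi (trace n (r * x)))" for x
  proof -
    have "h x * h' x = (\<Sum>t\<in>UNIV. \<Sum>s\<in>UNIV. c t * c' s * chi (trace n ((t + s) * x)))"
      by (simp add: c(2) c'(2) sum_product flip: chi_trace_mult) (simp only: ac_simps)
    also have "\<dots> = (\<Sum>t\<in>UNIV. \<Sum>r\<in>UNIV. c t * c' (r + t) * chi (trace n (r * x)))"
    proof (rule sum.cong[OF refl])
      fix t
      show "(\<Sum>s\<in>UNIV. c t * c' s * chi (trace n ((t + s) * x)))
          = (\<Sum>r\<in>UNIV. c t * c' (r + t) * chi (trace n (r * x)))"
        by (rule sum.reindex_bij_witness[of _ "\<lambda>r. r + t" "\<lambda>s. t + s"]) (auto simp: add.commute)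
    qed
    also have "\<dots> = (\<Sum>r\<in>UNIV. d r * chi (trace n (r * x)))"
      by (subst sum.swap) (simp add: d_def sum_distrib_right)
    finally show ?thesis .
  qed
  ultimately show ?thesis
    unfolding in_character_span_def by blast
qed

lemma in_character_span_prod:
  assumes "F2_subspace V" "\<And>i. i \<in> A \<Longrightarrow> in_character_span V (h i)"
  shows "in_character_span V (\<lambda>x. \<Prod>i\<in>A. h i x)"
  using assms(2)
  by (induction A rule: infinite_finite_induct)
    (use assms(1) in \<open>auto simp: F2_subspace_def intro: in_character_span_const in_character_span_mult\<close>)

lemma in_character_span_shift:
  assumes "in_character_span V h"
  shows "in_character_span V (\<lambda>x. h (x + e))"
proof -
  obtain c where c: "\<forall>t. t \<notin> V \<longrightarrow> c t = 0" "\<forall>x. h x = (\<Sum>t\<in>UNIV. c t * chi (trace n (t * x)))"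
    using assms by (auto simp: in_character_span_def)
  have "h (x + e) = (\<Sum>t\<in>UNIV. (c t * chi (trace n (t * e))) * chi (trace n (t * x)))" for x
    by (simp add: c(2) distrib_left trace_add chi_add trace_in_F2 ac_simps)
  with c(1) show ?thesis
    unfolding in_character_span_def by (intro exI[of _ "\<lambda>t. c t * chi (trace n (t * e))"]) auto
qed

lemma in_character_span_shift_invariant:
  assumes "in_character_span V h" "\<And>t. t \<in> V \<Longrightarrow> trace n (t * e) = 0"
  shows "h (x + e) = h x"
proof -
  obtain c where c: "\<forall>t. t \<notin> V \<longrightarrow> c t = 0" "\<forall>x. h x = (\<Sum>t\<in>UNIV. c t * chi (trace n (t * x)))"
    using assms(1) by (auto simp: in_character_span_def)
  have "c t * chi (trace n (t * (x + e))) = c t * chi (trace n (t * x))" for t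
    using assms(2)[of t] c(1) by (cases "t \<in> V") (auto simp: distrib_left trace_add)
  then show ?thesis
    unfolding c(2)[rule_format] by (rule sum.cong[OF refl])
qed

lemma in_character_span_orthogonal:
  assumes "F2_subspace V" "in_character_span V h" "w \<notin> V"
  shows "(\<Sum>x\<in>UNIV. chi (trace n (w * x)) * h x) = 0"
proof -
  obtain c where c: "\<forall>t. t \<notin> V \<longrightarrow> c t = 0" "\<forall>x. h x = (\<Sum>t\<in>UNIV. c t * chi (trace n (t * x)))"
    using assms(2) by (auto simp: in_character_span_def)
  have "(\<Sum>x\<in>UNIV. chi (trace n (w * x)) * h x)
      = (\<Sum>x\<in>UNIV. \<Sum>t\<in>UNIV. c t * chi (trace n ((t + w) * x)))"
    by (simp add: c(2) sum_distrib_left mult.left_commute chi_trace_mult add.commute)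
  also have "\<dots> = (\<Sum>t\<in>UNIV. c t * (\<Sum>x\<in>UNIV. chi (trace n ((t + w) * x))))"
    by (subst sum.swap) (simp add: sum_distrib_left)
  also have "\<dots> = 0"
  proof (intro sum.neutral ballI)
    fix t
    have "t \<in> V \<Longrightarrow> t + w \<noteq> 0"
      using assms(3) add_eq_0_iff_eq by auto
    then show "c t * (\<Sum>x\<in>UNIV. chi (trace n ((t + w) * x))) = 0"
      using c(1) character_sum_eq_0 by (cases "t \<in> V") auto
  qed
  finally show ?thesis .
qed

lemma in_character_span_chi_eval_rpoly:
  fixes y :: "nat \<Rightarrow> 'a \<Rightarrow> 'a"
  assumes V: "F2_subspace V"
    and F2: "\<And>j x. y j x \<in> F2"
    and span: "\<And>M j. M \<in> S \<Longrightarrow> j \<in> M \<Longrightarrow> in_character_span V (\<lambda>x. chi (y j x))"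
  shows "in_character_span V (\<lambda>x. chi (eval_rpoly S (\<lambda>j. y j x)))"
proof -
  have "chi (eval_rpoly S (\<lambda>j. y j x)) = (\<Prod>M\<in>S. 1 + (-2) * (\<Prod>j\<in>M. 1/2 + (-1/2) * chi (y j x)))" for x
    unfolding eval_rpoly_def
    by (subst chi_sum) (auto intro!: prod_in_F2 F2 prod.cong simp: chi_prod_F2 F2 diff_divide_distrib)
  moreover have "in_character_span V (\<lambda>x. \<Prod>M\<in>S. 1 + (-2) * (\<Prod>j\<in>M. 1/2 + (-1/2) * chi (y j x)))"
    using V span
    by (intro in_character_span_prod in_character_span_add in_character_span_scale in_character_span_const)
      (auto simp: F2_subspace_def)
  ultimately show ?thesis
    by simp
qed

end

section \<open>Algebraic normal form and degree\<close>

lemma prod_indicator: "finite M \<Longrightarrow> (\<Prod>i\<in>M. if i \<in> X then 1 else 0 :: 'a::comm_semiring_1) = (if M \<subseteq> X then 1 else 0)"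
  by (induction M rule: finite_induct) auto

lemma card_le_rdeg: "finite S \<Longrightarrow> M \<in> S \<Longrightarrow> card M \<le> rdeg S"
  by (auto simp: rdeg_def)

definition hderiv :: "('a::comm_monoid_add \<Rightarrow> 'b::comm_monoid_add) \<Rightarrow> nat set \<Rightarrow> (nat \<Rightarrow> 'a) \<Rightarrow> 'a \<Rightarrow> 'b" where
  "hderiv f A a x = (\<Sum>Y\<in>Pow A. f (x + (\<Sum>i\<in>Y. a i)))"

lemma hderiv_add: "hderiv (\<lambda>x. f x + g x) A a x = hderiv f A a x + hderiv g A a x"
  by (simp add: hderiv_def sum.distrib)

lemma hderiv_insert:
  assumes "finite A" "j \<notin> A"
  shows "hderiv f (insert j A) a x = hderiv (\<lambda>z. f (z + a j) + f z) A a x"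
proof -
  have "inj_on (insert j) (Pow A)" and "Pow A \<inter> insert j ` Pow A = {}"
    using assms by (auto simp: inj_on_def)
  then have "hderiv f (insert j A) a x
      = (\<Sum>Y\<in>Pow A. f (x + (\<Sum>i\<in>Y. a i))) + (\<Sum>Y\<in>Pow A. f (x + (\<Sum>i\<in>insert j Y. a i)))"
    using assms by (simp add: hderiv_def Pow_insert sum.union_disjoint sum.reindex)
  also have "(\<Sum>Y\<in>Pow A. f (x + (\<Sum>i\<in>insert j Y. a i))) = (\<Sum>Y\<in>Pow A. f (x + (\<Sum>i\<in>Y. a i) + a j))"
  proof (intro sum.cong refl)
    fix Y
    assume "Y \<in> Pow A"
    then have "finite Y" "j \<notin> Y"
      using assms finite_subset by auto
    then show "f (x + (\<Sum>i\<in>insert j Y. a i)) = f (x + (\<Sum>i\<in>Y. a i) + a j)"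
      by (simp add: ac_simps)
  qed
  finally show ?thesis
    by (simp add: hderiv_def sum.distrib add.commute)
qed

lemma hderiv_pair:
  assumes "i \<noteq> j"
  shows "hderiv f {i, j} a x = f (x + a j + a i) + f (x + a j) + (f (x + a i) + f x)"
proof -
  have "hderiv f {i, j} a x = hderiv (\<lambda>z. f (z + a i) + f z) {j} a x"
    using assms by (intro hderiv_insert) auto
  also have "\<dots> = hderiv (\<lambda>z. f (z + a j + a i) + f (z + a j) + (f (z + a i) + f z)) {} a x"
    by (subst hderiv_insert) auto
  finally show ?thesis
    by (simp add: hderiv_def)
qed

lemma of_nat_card_filter:
  "finite A \<Longrightarrow> (of_nat (card {x\<in>A. P x}) :: 'a::semiring_1) = (\<Sum>x\<in>A. if P x then 1 else 0)"
  by (simp add: sum.inter_filter [symmetric])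

lemma card_supersets_in_Pow:
  assumes "finite X" "Y \<subseteq> X"
  shows "card {M\<in>Pow X. Y \<subseteq> M} = 2 ^ card (X - Y)"
proof -
  have "bij_betw (\<lambda>Z. Z \<union> Y) (Pow (X - Y)) {M\<in>Pow X. Y \<subseteq> M}"
    using assms(2) by (intro bij_betw_byWitness[where f' = "\<lambda>M. M - Y"]) auto
  then have "card (Pow (X - Y)) = card {M\<in>Pow X. Y \<subseteq> M}"
    by (rule bij_betw_same_card)
  then show ?thesis
    using assms by (simp add: card_Pow)
qed

context char2
begin

lemma sum_supersets_in_Pow:
  assumes "finite X" "N \<subseteq> X"
  shows "(\<Sum>M\<in>Pow X. if N \<subseteq> M then 1 else 0 :: 'a) = (if N = X then 1 else 0)"
proof -
  have "(\<Sum>M\<in>Pow X. if N \<subseteq> M then 1 else 0 :: 'a) = of_nat (card {M\<in>Pow X. N \<subseteq> M})"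
    using of_nat_card_filter[where 'a = 'a, of "Pow X" "\<lambda>M. N \<subseteq> M"] assms(1) by simp
  also have "\<dots> = 0 ^ card (X - N)"
    using card_supersets_in_Pow[OF assms] by simp
  also have "card (X - N) = 0 \<longleftrightarrow> N = X"
    using assms by auto
  ultimately show ?thesis
    by (cases "card (X - N)") auto
qed

lemma sum_Pow_sum_Pow:
  assumes "finite X"
  shows "(\<Sum>M\<in>Pow X. \<Sum>Y\<in>Pow M. g Y) = (g X :: 'a)"
proof -
  have Pow_M: "(\<Sum>Y\<in>Pow M. g Y) = (\<Sum>Y\<in>Pow X. if Y \<subseteq> M then g Y else 0)" if "M \<subseteq> X" for M
  proof -
    have "{Y\<in>Pow X. Y \<subseteq> M} = Pow M"
      using that by auto
    then show ?thesis
      using sum.inter_filter[of "Pow X" g "\<lambda>Y. Y \<subseteq> M"] assms by simp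
  qed
  then have "(\<Sum>M\<in>Pow X. \<Sum>Y\<in>Pow M. g Y) = (\<Sum>M\<in>Pow X. \<Sum>Y\<in>Pow X. if Y \<subseteq> M then g Y else 0)"
    by (intro sum.cong[OF refl]) (simp add: Pow_M)
  also have "\<dots> = (\<Sum>Y\<in>Pow X. g Y * (\<Sum>M\<in>Pow X. if Y \<subseteq> M then 1 else 0))"
    by (subst sum.swap) (simp add: sum_distrib_left if_distrib[where f = "\<lambda>z. _ * z"] cong: if_cong)
  also have "\<dots> = g X"
    using assms by (simp add: sum_supersets_in_Pow if_distrib[where f = "\<lambda>z. _ * z"] cong: if_cong)
  finally show ?thesis .
qed

lemma anf_rep_finite: "anf_rep m b f S \<Longrightarrow> finite S"
  unfolding anf_rep_def by (meson finite_Pow_iff finite_lessThan finite_subset)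

lemma sum_Pow_count_subsets:
  assumes "finite M" "finite S"
  shows "(\<Sum>Y\<in>Pow M. \<Sum>N\<in>S. if N \<subseteq> Y then 1 else 0 :: 'a) = (if M \<in> S then 1 else 0)"
proof -
  have "(\<Sum>Y\<in>Pow M. \<Sum>N\<in>S. if N \<subseteq> Y then 1 else 0 :: 'a) = (\<Sum>N\<in>S. \<Sum>Y\<in>Pow M. if N \<subseteq> Y then 1 else 0)"
    by (rule sum.swap)
  also have "\<dots> = (\<Sum>N\<in>S. if N = M then 1 else 0)"
  proof (rule sum.cong[OF refl])
    fix N
    show "(\<Sum>Y\<in>Pow M. if N \<subseteq> Y then 1 else 0 :: 'a) = (if N = M then 1 else 0)"
    proof (cases "N \<subseteq> M")
      case True
      then show ?thesis
        using sum_supersets_in_Pow[OF assms(1)] by simp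
    next
      case False
      then have "(\<Sum>Y\<in>Pow M. if N \<subseteq> Y then 1 else 0 :: 'a) = 0"
        by (intro sum.neutral) auto
      with False show ?thesis
        by auto
    qed
  qed
  finally show ?thesis
    using assms(2) by simp
qed

lemma anf_rep_coefficient:
  assumes S: "anf_rep m b (f :: 'a \<Rightarrow> 'a) S" and M: "M \<subseteq> {..<m}"
  shows "(\<Sum>Y\<in>Pow M. f (\<Sum>i\<in>Y. b i)) = (if M \<in> S then 1 else 0)"
proof -
  have fin: "finite M" "finite S"
    using M anf_rep_finite[OF S] finite_subset by auto
  have "(\<Sum>Y\<in>Pow M. f (\<Sum>i\<in>Y. b i)) = (\<Sum>Y\<in>Pow M. \<Sum>N\<in>S. if N \<subseteq> Y then 1 else 0)"
    using S M fin(2) by (intro sum.cong refl) (auto simp: anf_rep_def of_nat_card_filter)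
  also have "\<dots> = (if M \<in> S then 1 else 0)"
    using fin by (rule sum_Pow_count_subsets)
  finally show ?thesis .
qed

lemma anf_rep_unique:
  assumes "anf_rep m b (f :: 'a \<Rightarrow> 'a) S" "anf_rep m b f S'"
  shows "S = S'"
proof -
  have "S \<subseteq> Pow {..<m}" "S' \<subseteq> Pow {..<m}"
    using assms by (auto simp: anf_rep_def)
  moreover have "M \<in> S \<longleftrightarrow> M \<in> S'" if "M \<subseteq> {..<m}" for M
    using anf_rep_coefficient[OF assms(1) that] anf_rep_coefficient[OF assms(2) that]
    by (auto split: if_splits)
  ultimately show ?thesis
    by blast
qed

lemma anf_rep_exists:
  assumes f: "\<And>x. (f :: 'a \<Rightarrow> 'a) x \<in> F2"
  shows "\<exists>S. anf_rep m b f S"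
proof
  define s where "s M = (\<Sum>Y\<in>Pow M. f (\<Sum>i\<in>Y. b i))" for M
  have s: "s M \<in> F2" for M
    unfolding s_def by (intro sum_in_F2 f)
  show "anf_rep m b f {M\<in>Pow {..<m}. s M \<noteq> 0}"
    unfolding anf_rep_def
  proof (intro conjI ballI)
    fix X assume X: "X \<in> Pow {..<m}"
    then have fin: "finite X"
      using finite_subset by auto
    have "{M\<in>{M\<in>Pow {..<m}. s M \<noteq> 0}. M \<subseteq> X} = {M\<in>Pow X. s M \<noteq> 0}"
      using X by auto
    then have "(of_nat (card {M\<in>{M\<in>Pow {..<m}. s M \<noteq> 0}. M \<subseteq> X}) :: 'a)
        = (\<Sum>M\<in>Pow X. if s M \<noteq> 0 then 1 else 0)"
      using of_nat_card_filter[where 'a = 'a, of "Pow X" "\<lambda>M. s M \<noteq> 0"] fin by simp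
    also have "\<dots> = (\<Sum>M\<in>Pow X. s M)"
      using s by (intro sum.cong refl) (auto simp: F2_def)
    also have "\<dots> = f (\<Sum>i\<in>X. b i)"
      unfolding s_def by (rule sum_Pow_sum_Pow[OF fin])
    finally show "f (\<Sum>i\<in>X. b i) = of_nat (card {M\<in>{M\<in>Pow {..<m}. s M \<noteq> 0}. M \<subseteq> X})" ..
  qed auto
qed

text \<open>An upper bound for the algebraic degree that, unlike the degree of the normal form,
  is visibly preserved by shifts and lowered by derivatives.\<close>

inductive degree_le :: "nat \<Rightarrow> ('a \<Rightarrow> 'a) \<Rightarrow> bool" where
  const: "degree_le m (\<lambda>x. c)"
| add: "degree_le m f \<Longrightarrow> degree_le m g \<Longrightarrow> degree_le m (\<lambda>x. f x + g x)"
| mult: "degree_le m f \<Longrightarrow> additive \<beta> \<Longrightarrow> degree_le (Suc m) (\<lambda>x. \<beta> x * f x)"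
| Suc: "degree_le m f \<Longrightarrow> degree_le (Suc m) f"

lemma degree_le_mono:
  assumes "degree_le m f" "m \<le> m'"
  shows "degree_le m' f"
  using assms(2) by (induction rule: dec_induct) (auto intro: assms(1) degree_le.Suc)

lemma degree_le_scale: "degree_le m f \<Longrightarrow> degree_le m (\<lambda>x. c * f x)"
proof (induction rule: degree_le.induct)
  case (add m f g)
  then show ?case
    using degree_le.add by (simp add: distrib_left)
next
  case (mult m f \<beta>)
  then show ?case
    using degree_le.mult[of m "\<lambda>x. c * f x" \<beta>] by (simp add: ac_simps)
qed (auto intro: degree_le.intros)

lemma degree_le_shift: "degree_le m f \<Longrightarrow> degree_le m (\<lambda>x. f (x + a))"
proof (induction rule: degree_le.induct)
  case (mult m f \<beta>)
  then have "degree_le (Suc m) (\<lambda>x. \<beta> x * f (x + a) + \<beta> a * f (x + a))"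
    by (intro degree_le.add degree_le.mult degree_le.Suc degree_le_scale)
  with mult.hyps(2) show ?case
    by (simp add: additive.add distrib_right)
qed (auto intro: degree_le.intros)

lemma degree_le_0_imp_const: "degree_le m f \<Longrightarrow> m = 0 \<Longrightarrow> f x = f y"
  by (induction rule: degree_le.induct) auto

lemma degree_le_derivative: "degree_le m f \<Longrightarrow> degree_le (m - 1) (\<lambda>x. f (x + a) + f x)"
proof (induction rule: degree_le.induct)
  case (add m f g)
  have "degree_le (m - 1) (\<lambda>x. (f (x + a) + f x) + (g (x + a) + g x))"
    using add.IH by (rule degree_le.add)
  then show ?case
    by (simp add: ac_simps)
next
  case (mult m f \<beta>)
  have "\<beta> (x + a) * f (x + a) + \<beta> x * f x = \<beta> x * (f (x + a) + f x) + \<beta> a * f (x + a)" for x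
    using mult.hyps(2) by (simp add: additive.add algebra_simps)
  moreover have "degree_le m (\<lambda>x. \<beta> x * (f (x + a) + f x))"
  proof (cases m)
    case 0
    have "f (x + a) = f x" for x
      using degree_le_0_imp_const[OF mult.hyps(1) 0] .
    then show ?thesis
      using degree_le.const[of m 0] by simp
  next
    case (Suc m')
    then show ?thesis
      using mult by (simp add: degree_le.mult)
  qed
  then have "degree_le m (\<lambda>x. \<beta> x * (f (x + a) + f x) + \<beta> a * f (x + a))"
    using mult.hyps(1) by (intro degree_le.add degree_le_scale degree_le_shift)
  ultimately show ?case
    by simp
next
  case (Suc m f)
  then show ?case
    by (auto elim: degree_le_mono)
qed (auto intro: degree_le.intros)

lemma hderiv_eq_0_if_degree_le:
  "finite A \<Longrightarrow> degree_le m f \<Longrightarrow> m < card A \<Longrightarrow> hderiv f A a x = 0"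
proof (induction A arbitrary: f m rule: finite_induct)
  case (insert j A)
  have "hderiv f (insert j A) a x = hderiv (\<lambda>z. f (z + a j) + f z) A a x"
    using insert.hyps by (rule hderiv_insert)
  also have "\<dots> = 0"
  proof (cases m)
    case 0
    have "f (z + a j) = f z" for z
      using degree_le_0_imp_const[OF insert.prems(1) 0] .
    then show ?thesis
      by (simp add: hderiv_def)
  next
    case (Suc m')
    then have "degree_le m' (\<lambda>z. f (z + a j) + f z)"
      using degree_le_derivative[OF insert.prems(1), of "a j"] by simp
    moreover have "m' < card A"
      using insert Suc by simp
    ultimately show ?thesis
      by (rule insert.IH)
  qed
  finally show ?case .
qed simp

lemma degree_le_sum: "(\<And>M. M \<in> S \<Longrightarrow> degree_le m (g M)) \<Longrightarrow> degree_le m (\<lambda>x. \<Sum>M\<in>S. g M x)"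
  by (induction S rule: infinite_finite_induct) (auto intro: degree_le.intros)

lemma degree_le_prod_additive:
  "finite M \<Longrightarrow> (\<And>i. i \<in> M \<Longrightarrow> additive (\<beta> i)) \<Longrightarrow> degree_le (card M) (\<lambda>x. \<Prod>i\<in>M. \<beta> i x)"
  by (induction M rule: finite_induct) (auto intro: degree_le.intros)

lemma additive_coord: "F2_basis m b (UNIV :: 'a set) \<Longrightarrow> additive (coord m b i)"
  by (intro additive.intro) (simp add: coord_add)

lemma anf_rep_finite_monomial: "anf_rep m b f S \<Longrightarrow> M \<in> S \<Longrightarrow> finite M"
  unfolding anf_rep_def by (meson PowD finite_lessThan finite_subset subsetD)

lemma anf_rep_eval:
  assumes B: "F2_basis m b (UNIV :: 'a set)" and S: "anf_rep m b f S"
  shows "f x = (\<Sum>M\<in>S. \<Prod>i\<in>M. coord m b i x)"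
proof -
  obtain X where X: "X \<subseteq> {..<m}" "x = (\<Sum>i\<in>X. b i)"
    using F2_basis_obtain[OF B] by blast
  have fin: "finite S" "\<And>M. M \<in> S \<Longrightarrow> finite M"
    using anf_rep_finite[OF S] anf_rep_finite_monomial[OF S] by auto
  have "f x = (\<Sum>M\<in>S. if M \<subseteq> X then 1 else 0)"
    using S X fin by (simp add: anf_rep_def of_nat_card_filter)
  also have "\<dots> = (\<Sum>M\<in>S. \<Prod>i\<in>M. coord m b i x)"
    by (intro sum.cong refl) (simp add: X(2) coord_F2_basis_sum[OF B X(1)] prod_indicator fin)
  finally show ?thesis .
qed

lemma anf_rep_degree_le:
  assumes B: "F2_basis m b (UNIV :: 'a set)" and S: "anf_rep m b f S"
  shows "degree_le (rdeg S) f"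
proof -
  have fin: "finite S" "\<And>M. M \<in> S \<Longrightarrow> finite M"
    using anf_rep_finite[OF S] anf_rep_finite_monomial[OF S] by auto
  have "degree_le (rdeg S) (\<lambda>x. \<Sum>M\<in>S. \<Prod>i\<in>M. coord m b i x)"
    using fin card_le_rdeg
    by (intro degree_le_sum degree_le_mono[OF degree_le_prod_additive] additive_coord[OF B]) auto
  then show ?thesis
    using anf_rep_eval[OF B S] by presburger
qed

lemma rdeg_le_if_degree_le:
  assumes S: "anf_rep m b f S" and f: "degree_le d f"
  shows "rdeg S \<le> d"
proof -
  have "card M \<le> d" if M: "M \<in> S" for M
  proof (rule ccontr)
    assume "\<not> card M \<le> d"
    moreover have M_sub: "M \<subseteq> {..<m}"
      using S M by (auto simp: anf_rep_def)
    moreover have "finite M"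
      using M_sub finite_subset by auto
    ultimately have "hderiv f M b 0 = 0"
      using f by (intro hderiv_eq_0_if_degree_le) auto
    moreover have "hderiv f M b 0 = 1"
      using anf_rep_coefficient[OF S M_sub] M by (simp add: hderiv_def)
    ultimately show False
      by simp
  qed
  then show ?thesis
    using anf_rep_finite[OF S] by (simp add: rdeg_def Max_le_iff)
qed

end

context binary_field
begin

lemma bool_alg_degree_anf_rep:
  fixes f :: "'a \<Rightarrow> 'a"
  assumes "\<And>x. f x \<in> F2"
  obtains b S where "F2_basis n b UNIV" "anf_rep n b f S" "bool_alg_degree n f = rdeg S"
proof -
  define b where "b = (SOME b. F2_basis n b (UNIV :: 'a set))"
  have "\<exists>b. F2_basis n b (UNIV :: 'a set)"
    by (rule F2_basis_exists) (simp_all add: F2_subspace_def card_UNIV)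
  then have B: "F2_basis n b UNIV"
    unfolding b_def by (rule someI_ex)
  obtain S where S: "anf_rep n b f S"
    using anf_rep_exists[of f n b] assms by blast
  then have "(THE S. anf_rep n b f S) = S"
    using anf_rep_unique by (intro the_equality)
  then have "bool_alg_degree n f = rdeg S"
    by (simp add: bool_alg_degree_def b_def [symmetric])
  with B S that show ?thesis
    by blast
qed

lemma bool_alg_degree_le:
  "(\<And>x. f x \<in> F2) \<Longrightarrow> degree_le d f \<Longrightarrow> bool_alg_degree n (f :: 'a \<Rightarrow> 'a) \<le> d"
  by (metis bool_alg_degree_anf_rep rdeg_le_if_degree_le)

lemma card_le_bool_alg_degree:
  "(\<And>x. f x \<in> F2) \<Longrightarrow> finite A \<Longrightarrow> hderiv f A a x \<noteq> 0 \<Longrightarrow> card A \<le> bool_alg_degree n (f :: 'a \<Rightarrow> 'a)"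
  by (metis bool_alg_degree_anf_rep anf_rep_degree_le hderiv_eq_0_if_degree_le not_le)

end

section \<open>The field of order \<open>2 ^ 4k\<close>\<close>

lemma card_le_card_range_mult_card_kernel:
  fixes T :: "'a::{ab_group_add,finite} \<Rightarrow> 'b::ab_group_add"
  assumes T: "additive T"
  shows "card (UNIV :: 'a set) \<le> card (range T) * card {x. T x = 0}"
proof -
  have fiber: "card {y. T y = T y0} \<le> card {x. T x = 0}" for y0
  proof -
    have "{y. T y = T y0} \<subseteq> (\<lambda>x. x + y0) ` {x. T x = 0}"
    proof
      fix y
      assume "y \<in> {y. T y = T y0}"
      then have "y - y0 \<in> {x. T x = 0}"
        using additive.diff[OF T] by simp
      then show "y \<in> (\<lambda>x. x + y0) ` {x. T x = 0}"
        by (rule rev_image_eqI) simp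
    qed
    then have "card {y. T y = T y0} \<le> card ((\<lambda>x. x + y0) ` {x. T x = 0})"
      by (intro card_mono) auto
    also have "\<dots> \<le> card {x. T x = 0}"
      by (rule card_image_le) simp
    finally show ?thesis .
  qed
  have "UNIV = (\<Union>z\<in>range T. {y. T y = z})"
    by auto
  then have "card (UNIV :: 'a set) \<le> (\<Sum>z\<in>range T. card {y. T y = z})"
    using card_UN_le[of "range T" "\<lambda>z. {y. T y = z}"] by simp
  also have "\<dots> \<le> card (range T) * card {x. T x = 0}"
    using sum_bounded_above[of "range T" "\<lambda>z. card {y. T y = z}"] fiber by auto
  finally show ?thesis .
qed

context char2
begin

lemma card_subfield_le:
  assumes "0 < m"
  shows "card (subfield m :: 'a set) \<le> 2 ^ m"
proof -
  have "(1::nat) \<noteq> 2 ^ m"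
    using one_less_power[of "2::nat" m] assms by simp
  then have "(\<Sum>i\<in>{1, 2 ^ m}. 1 * x ^ i) = x + x ^ 2 ^ m" for x :: 'a
    by simp
  then have "{x::'a. (\<Sum>i\<in>{1, 2 ^ m}. 1 * x ^ i) = 0} = subfield m"
    by (auto simp: subfield_def add_eq_0_iff_eq)
  moreover have "card {x::'a. (\<Sum>i\<in>{1, 2 ^ m}. 1 * x ^ i) = 0} \<le> 2 ^ m"
    by (rule card_roots_sparse_poly_le) auto
  ultimately show ?thesis
    by simp
qed

end

locale binary_field_4k = binary_field +
  fixes k :: nat
  assumes n_eq_4k: "n = 4 * k" and two_le_k: "2 \<le> k"
begin

abbreviation q :: nat where
  "q \<equiv> 2 ^ k"

lemma four_dvd_q: "4 dvd q"
  using two_le_k le_imp_power_dvd[of 2 k 2] by simp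

lemma power_two_power_mult_k: "(2::nat) ^ (j * k) = q ^ j"
  by (metis power_mult mult.commute)

lemma power_q4 [simp]: "(x::'a) ^ q ^ 4 = x"
  using power_card[of x] power_two_power_mult_k[of 4] by (simp add: n_eq_4k)

lemma subfield_k_iff: "(x::'a) \<in> subfield k \<longleftrightarrow> x ^ q = x"
  by (simp add: subfield_def)

lemma subfield_2k_iff: "(x::'a) \<in> subfield (2 * k) \<longleftrightarrow> x ^ q ^ 2 = x"
  using power_two_power_mult_k[of 2] by (simp add: subfield_def)

lemma power_q_power_q: "((x::'a) ^ q ^ i) ^ q ^ j = x ^ q ^ (i + j)"
  by (simp add: power_add power_mult)

lemma trace4_in_subfield: "trace4 k (y::'a) \<in> subfield k"
proof -
  have e: "k + k = 2 * k" "2 * k + k = 3 * k" "3 * k + k = 4 * k"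
    by simp_all
  have "(trace4 k y) ^ 2 ^ k = y ^ 2 ^ k + y ^ 2 ^ (2 * k) + y ^ 2 ^ (3 * k) + y ^ 2 ^ (4 * k)"
    by (simp only: trace4_def power_two_power_add power_two_power_power_two_power e)
  also have "\<dots> = trace4 k y"
    by (simp only: power_card[unfolded n_eq_4k]) (simp add: trace4_def ac_simps)
  finally show ?thesis
    by (simp add: subfield_def)
qed

lemma trace_subfield_k_eq_0:
  assumes "(y::'a) \<in> subfield k"
  shows "trace n y = 0"
proof -
  have "(4::'a) = 2 + 2"
    by (rule numeral_Bit0)
  then have "(of_nat 4 :: 'a) = 0"
    by simp
  then show ?thesis
    using trace_subfield_multiple[OF assms, of 4] by (simp add: n_eq_4k)
qed

lemma trace_trace4_eq_trace_n: "l \<in> subfield k \<Longrightarrow> trace k (l * trace4 k (y::'a)) = trace n (l * y)"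
  by (simp add: trace_trace4 n_eq_4k)

lemma card_trace4_kernel_le: "card {y::'a. trace4 k y = 0} \<le> q ^ 3"
proof -
  have "inj_on (\<lambda>j. q ^ j) {..<4}"
    using one_less_power[of "2::nat" k] two_le_k by (auto simp: inj_on_def power_inject_exp)
  then have "trace4 k y = (\<Sum>e\<in>(\<lambda>j. q ^ j) ` {..<4}. 1 * y ^ e)" for y :: 'a
    by (simp add: sum.reindex trace4_eq_sum power_two_power_mult_k)
  moreover have "card {y::'a. (\<Sum>e\<in>(\<lambda>j. q ^ j) ` {..<4}. 1 * y ^ e) = 0} \<le> q ^ 3"
    using two_le_k by (intro card_roots_sparse_poly_le) (auto intro: power_increasing)
  ultimately show ?thesis
    by simp
qed

lemma card_subfield_k: "card (subfield k :: 'a set) = q"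
proof (rule antisym)
  show "card (subfield k :: 'a set) \<le> q"
    using two_le_k by (intro card_subfield_le) simp
  have "q * q ^ 3 = card (UNIV :: 'a set)"
    using card_UNIV power_two_power_mult_k[of 4] by (simp add: n_eq_4k eval_nat_numeral)
  also have "\<dots> \<le> card (range (trace4 k :: 'a \<Rightarrow> 'a)) * card {y::'a. trace4 k y = 0}"
    by (intro card_le_card_range_mult_card_kernel additive.intro) (simp add: trace4_add)
  also have "\<dots> \<le> card (range (trace4 k :: 'a \<Rightarrow> 'a)) * q ^ 3"
    by (rule mult_le_mono2[OF card_trace4_kernel_le])
  also have "\<dots> \<le> card (subfield k :: 'a set) * q ^ 3"
    using trace4_in_subfield by (intro mult_le_mono1 card_mono) auto
  finally show "q \<le> card (subfield k :: 'a set)"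
    by simp
qed

lemma subfield_k_basis_exists: "\<exists>c. F2_basis k c (subfield k :: 'a set)"
  by (intro F2_basis_exists F2_subspace_subfield card_subfield_k)

lemma q_pos: "0 < q"
  by simp

lemma power_q_q: "((x::'a) ^ q) ^ q = x ^ q ^ 2"
  by (simp add: power2_eq_square flip: power_mult)

lemma power_q_q_subfield_2k: "x \<in> subfield (2 * k) \<Longrightarrow> ((x::'a) ^ q) ^ q = x"
  by (simp add: power_q_q subfield_2k_iff)

lemma power_q_power_add: "((x::'a) + y) ^ q ^ j = x ^ q ^ j + y ^ q ^ j"
  using power_two_power_add[of x y "j * k"] by (simp add: power_two_power_mult_k)

lemma trace_power_q_power: "trace n ((y::'a) ^ q ^ j) = trace n y"
  using trace_power_two_power[of y "j * k"] by (simp add: power_two_power_mult_k)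

lemma unit_circle_iff: "(z::'a) \<in> unit_circle k \<longleftrightarrow> z ^ (q + 1) = 1"
proof
  assume z: "z ^ (q + 1) = 1"
  obtain r where r: "q = Suc r"
    using q_pos gr0_conv_Suc by blast
  then have "z ^ q ^ 2 = (z ^ (q + 1)) ^ r * z"
    by (simp add: power2_eq_square algebra_simps flip: power_mult power_add)
  with z show "z \<in> unit_circle k"
    by (simp add: unit_circle_def subfield_2k_iff)
qed (simp add: unit_circle_def)

lemma unit_circle_power_q: "(z::'a) \<in> unit_circle k \<Longrightarrow> z ^ q = inverse z"
  by (simp add: unit_circle_iff inverse_unique)

lemma unit_circle_eq_1_if_power4_eq_1:
  assumes "(z::'a) \<in> unit_circle k" "z ^ 4 = 1"
  shows "z = 1"
proof -
  obtain s where "q = 4 * s"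
    using four_dvd_q by blast
  then have "z ^ (q + 1) = (z ^ 4) ^ s * z"
    by (simp add: power_mult)
  with assms show ?thesis
    by (simp add: unit_circle_iff)
qed

lemma unit_circle_nontrivial: "\<exists>z::'a. z \<in> unit_circle k \<and> z \<noteq> 1"
proof -
  \<comment> \<open>\<open>z = x^D\<close> has \<open>z^(q+1) = x^(q^4-1) = 1\<close>, and \<open>x^D = 1\<close> has at most \<open>D < q^4 - 1\<close> roots.\<close>
  define D where "D = (q ^ 2 + 1) * (q - 1)"
  obtain r where r: "q = Suc r"
    using q_pos gr0_conv_Suc by blast
  have D_q: "D * (q + 1) + 1 = q ^ 4"
    by (simp add: D_def r power2_eq_square eval_nat_numeral algebra_simps)
  have "0 < D"
    using one_less_power[of "2::nat" k] two_le_k by (simp add: D_def)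
  then have "D < D * (q + 1)"
    using q_pos by simp
  then have "D < q ^ 4 - 1"
    using D_q by linarith
  then have "card {x::'a. x ^ D = 1} < card (UNIV - {0::'a})"
    using card_roots_of_unity_le[OF \<open>0 < D\<close>, where 'a = 'a] D_q card_UNIV power_two_power_mult_k[of 4]
    by (simp add: n_eq_4k card_Diff_singleton)
  then have "\<not> UNIV - {0::'a} \<subseteq> {x. x ^ D = 1}"
    by (meson card_mono finite leD)
  then obtain x :: 'a where x: "x \<noteq> 0" "x ^ D \<noteq> 1"
    by blast
  have "x ^ q ^ 4 = (x ^ D) ^ (q + 1) * x"
    by (simp only: D_q[symmetric] power_add power_mult power_one_right)
  then have "(x ^ D) ^ (q + 1) = 1"
    using x(1) by simp
  with x(2) show ?thesis
    by (auto simp: unit_circle_iff)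
qed

lemma generator_ne_1:
  assumes "(\<omega>::'a) \<in> unit_circle k" "unit_circle k \<subseteq> range (\<lambda>m::nat. \<omega> ^ m)"
  shows "\<omega> \<noteq> 1"
  using assms unit_circle_nontrivial by auto

text \<open>\<open>polar \<mu> e\<close> represents the linear form \<open>x \<mapsto> Tr(\<mu> x^q e + \<mu> e^q x)\<close>, the bilinear part
  of \<open>x \<mapsto> Tr(\<mu> x^(q+1))\<close>; see \<open>trace_quadratic_diff\<close>.\<close>

definition polar :: "'a \<Rightarrow> 'a \<Rightarrow> 'a" where
  "polar \<mu> e = \<mu> ^ q ^ 3 * e ^ q ^ 3 + \<mu> * e ^ q"

lemma power_q_plus_1_add: "(x + y) ^ (q + 1) = x ^ (q + 1) + x ^ q * y + y ^ q * x + (y::'a) ^ (q + 1)"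
proof -
  have "(x + y) ^ (q + 1) = (x ^ q + y ^ q) * (x + y)"
    by (simp only: power_add power_one_right power_two_power_add)
  then show ?thesis
    by (simp add: algebra_simps)
qed

lemma trace_shift_power_q: "trace n (\<mu> * x ^ q * e) = trace n (\<mu> ^ q ^ 3 * e ^ q ^ 3 * (x::'a))"
proof -
  have "(\<mu> * x ^ q * e) ^ q ^ 3 = \<mu> ^ q ^ 3 * e ^ q ^ 3 * x"
    using power_q_power_q[of x 1 3] by (simp add: power_mult_distrib)
  then show ?thesis
    using trace_power_q_power[of "\<mu> * x ^ q * e" 3] by simp
qed

lemma trace_quadratic_diff:
  "trace n (\<mu> * (x + e) ^ (q + 1)) + trace n (\<mu> * x ^ (q + 1))
     = trace n (polar \<mu> e * x) + trace n (\<mu> * (e::'a) ^ (q + 1))"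
proof -
  have expand: "\<mu> * (x + e) ^ (q + 1) = \<mu> * x ^ (q + 1) + \<mu> * x ^ q * e + \<mu> * e ^ q * x + \<mu> * e ^ (q + 1)"
    by (simp only: power_q_plus_1_add distrib_left mult.assoc)
  have "trace n (\<mu> * x ^ q * e) = trace n (\<mu> ^ q ^ 3 * e ^ q ^ 3 * x)"
    by (rule trace_shift_power_q)
  with expand show ?thesis
    by (simp add: polar_def trace_add distrib_left distrib_right ac_simps)
qed

lemma polar_add: "polar \<mu> (a + b) = polar \<mu> a + polar \<mu> (b::'a)"
  by (simp add: polar_def power_q_power_add power_two_power_add algebra_simps)

lemma polar_power_q: "(polar \<mu> e) ^ q = \<mu> * e + \<mu> ^ q * (e::'a) ^ q ^ 2"
proof -
  have "(polar \<mu> e) ^ q = (\<mu> ^ q ^ 3) ^ q * (e ^ q ^ 3) ^ q + \<mu> ^ q * (e ^ q) ^ q"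
    by (simp only: polar_def power_two_power_add power_mult_distrib)
  moreover have "(x ^ q ^ 3) ^ q = x" for x :: 'a
    using power_q_power_q[of x 3 1] by simp
  ultimately show ?thesis
    by (simp add: power_q_q)
qed

lemma polar_eq_0_iff:
  assumes l: "l \<in> subfield k" "l \<noteq> 0" and \<omega>: "\<omega> \<in> unit_circle k" "\<omega> \<noteq> 1"
  shows "polar (l * \<omega>) e = 0 \<longleftrightarrow> (e::'a) = 0"
proof
  have \<omega>0: "\<omega> \<noteq> 0"
    using \<omega>(1) by (auto simp: unit_circle_iff)
  have \<omega>_q2: "\<omega> ^ q ^ 2 = \<omega>"
    using \<omega>(1) by (simp add: unit_circle_def subfield_2k_iff)
  assume "polar (l * \<omega>) e = 0"
  \<comment> \<open>Then \<open>e^(q^2) = \<omega>^2 e\<close>, so \<open>e = e^(q^4) = \<omega>^4 e\<close>; but \<open>\<omega>^4 \<noteq> 1\<close>, as the order of \<open>\<omega> \<noteq> 1\<close>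
    divides the odd number \<open>q + 1\<close>.\<close>
  then have "l * \<omega> * e + (l * \<omega>) ^ q * e ^ q ^ 2 = 0"
    by (metis polar_power_q zero_power q_pos)
  then have "\<omega> * e = \<omega> ^ q * e ^ q ^ 2"
    using l by (simp add: power_mult_distrib subfield_k_iff add_eq_0_iff_eq mult.assoc)
  then have e_q2: "e ^ q ^ 2 = \<omega> ^ 2 * e"
    using \<omega>0 by (simp add: unit_circle_power_q[OF \<omega>(1)] power2_eq_square field_simps)
  have "e = (e ^ q ^ 2) ^ q ^ 2"
    using power_q_power_q[of e 2 2] by simp
  also have "\<dots> = (\<omega> ^ 2) ^ q ^ 2 * (\<omega> ^ 2 * e)"
    by (simp only: e_q2 power_mult_distrib)
  also have "(\<omega> ^ 2) ^ q ^ 2 = \<omega> ^ 2"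
    by (metis power_mult mult.commute \<omega>_q2)
  finally have "e = \<omega> ^ 4 * e"
    by (simp flip: mult.assoc power_add)
  then have "e = 0 \<or> \<omega> ^ 4 = 1"
    by (metis mult_cancel_right1)
  then show "e = 0"
    using unit_circle_eq_1_if_power4_eq_1[OF \<omega>(1)] \<omega>(2) by blast
qed (simp add: polar_def power_0_left)

lemma polar_subfield_2k:
  assumes "l \<in> subfield k" "\<omega> \<in> subfield (2 * k)" "e \<in> subfield (2 * k)"
  shows "polar (l * \<omega>) e = l * (\<omega> + \<omega> ^ q) * (e::'a) ^ q"
proof -
  have "x ^ q ^ 3 = x ^ q" if "x \<in> subfield (2 * k)" for x :: 'a
    using that power_q_power_q[of x 2 1] by (simp add: subfield_2k_iff)
  moreover have "l \<in> subfield (2 * k)"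
    using subfield_mono[OF assms(1), of 2] by (simp add: mult.commute)
  ultimately show ?thesis
    using assms by (simp add: polar_def power_mult_distrib subfield_k_iff algebra_simps)
qed

definition scalar_line :: "'a \<Rightarrow> 'a set" where
  "scalar_line u = (\<lambda>t. u * t) ` subfield k"

lemma F2_subspace_scalar_line: "F2_subspace (scalar_line u)"
  unfolding F2_subspace_def scalar_line_def
proof (intro conjI ballI)
  show "0 \<in> (\<lambda>t. u * t) ` subfield k"
    by (rule image_eqI[where x = 0]) (simp_all add: subfield_def)
next
  fix a b
  assume "a \<in> (\<lambda>t. u * t) ` subfield k" "b \<in> (\<lambda>t. u * t) ` subfield k"
  then obtain s t where "s \<in> subfield k" "t \<in> subfield k" "a = u * s" "b = u * t"
    by blast
  then show "a + b \<in> (\<lambda>t. u * t) ` subfield k"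
    by (intro image_eqI[where x = "s + t"] subfield_add) (simp_all add: distrib_left)
qed

lemma in_scalar_line_self: "(u::'a) \<in> scalar_line u"
  unfolding scalar_line_def by (rule image_eqI[where x = 1]) (simp_all add: subfield_def)

lemma in_scalar_line_if_norm_relation:
  assumes "w \<in> subfield (2 * k)" "u * w ^ q \<in> subfield k" "u * w ^ q \<noteq> 0"
  shows "(w::'a) \<in> scalar_line u"
proof -
  have "w ^ (q + 1) / (u * w ^ q) \<in> subfield k"
    using assms by (intro subfield_divide norm_in_subfield)
  moreover have "u * (w ^ (q + 1) / (u * w ^ q)) = w"
    using assms(3) by (simp add: field_simps)
  ultimately show ?thesis
    unfolding scalar_line_def by (metis image_eqI)
qed

lemma unit_circle_power_q_ne_self:
  assumes "\<omega> \<in> unit_circle k" "\<omega> \<noteq> 1"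
  shows "(\<omega>::'a) ^ q \<noteq> \<omega>"
proof
  assume "\<omega> ^ q = \<omega>"
  then have "\<omega> ^ 2 = 1"
    using assms(1) by (simp add: unit_circle_iff power2_eq_square)
  then have "\<omega> ^ 4 = 1"
    using power_mult[of \<omega> 2 2] by simp
  with unit_circle_eq_1_if_power4_eq_1[OF assms(1)] assms(2) show False
    by blast
qed

lemma polar_coefficient:
  assumes l: "l \<in> subfield k" "l \<noteq> 0" and \<omega>: "\<omega> \<in> unit_circle k" "\<omega> \<noteq> 1"
  shows "l * (\<omega> + \<omega> ^ q) \<in> subfield k" "l * (\<omega> + (\<omega>::'a) ^ q) \<noteq> 0"
proof -
  have "\<omega> \<in> subfield (2 * k)"
    using \<omega>(1) by (simp add: unit_circle_def)
  then have "(\<omega> + \<omega> ^ q) ^ q = \<omega> + \<omega> ^ q"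
    using power_q_q_subfield_2k by (simp add: power_two_power_add add.commute)
  then show "l * (\<omega> + \<omega> ^ q) \<in> subfield k" "l * (\<omega> + \<omega> ^ q) \<noteq> 0"
    using unit_circle_power_q_ne_self[OF \<omega>] l
    by (auto simp: subfield_k_iff power_mult_distrib add_eq_0_iff_eq)
qed

lemma polar_inverse_on_subfield_2k:
  assumes l: "l \<in> subfield k" "l \<noteq> 0" and \<omega>: "\<omega> \<in> unit_circle k" "\<omega> \<noteq> 1"
    and y: "y \<in> subfield (2 * k)"
  shows "polar (l * \<omega>) (y ^ q / (l * (\<omega> + \<omega> ^ q))) = (y::'a)"
proof -
  define c where "c = l * (\<omega> + \<omega> ^ q)"
  have c: "c \<in> subfield k" "c \<noteq> 0"
    using polar_coefficient[OF l \<omega>] by (simp_all add: c_def)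
  have "y ^ q / c \<in> subfield (2 * k)"
    using y c subfield_mono[of c k 2] by (auto simp: mult.commute intro!: subfield_divide subfield_power)
  then have "polar (l * \<omega>) (y ^ q / c) = c * ((y ^ q) ^ q / c ^ q)"
    using polar_subfield_2k[OF l(1), of \<omega>] \<omega>(1) by (simp add: c_def unit_circle_def power_divide)
  also have "\<dots> = y"
    using power_q_q_subfield_2k[OF y] c by (simp add: subfield_k_iff)
  finally show ?thesis
    by (simp add: c_def)
qed

lemma trace_scalar_line_eq_0_if_polar_in_line:
  assumes l: "l \<in> subfield k" "l \<noteq> 0" and \<omega>: "\<omega> \<in> unit_circle k" "\<omega> \<noteq> 1"
    and u: "u \<in> subfield (2 * k)" and polar_e: "polar (l * \<omega>) e \<in> scalar_line u"
    and v: "v \<in> scalar_line u"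
  shows "trace n (v * e) = 0"
proof -
  obtain t s where t: "t \<in> subfield k" "polar (l * \<omega>) e = u * t"
    and s: "s \<in> subfield k" "v = u * s"
    using polar_e v by (auto simp: scalar_line_def)
  define c where "c = l * (\<omega> + \<omega> ^ q)"
  have "u * t \<in> subfield (2 * k)"
    using u t(1) subfield_mono[of t k 2] by (auto intro: subfield_mult simp: mult.commute)
  then have "polar (l * \<omega>) (e + (u * t) ^ q / c) = 0"
    using polar_inverse_on_subfield_2k[OF l \<omega>] t(2) by (simp add: c_def polar_add)
  then have "e = (u * t) ^ q / c"
    using polar_eq_0_iff[OF l \<omega>] by (simp add: add_eq_0_iff_eq)
  then have "v * e = u ^ (q + 1) * s * t ^ q / c"
    by (simp add: s(2) power_mult_distrib algebra_simps)
  also have "\<dots> \<in> subfield k"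
    using norm_in_subfield[OF u] s(1) t(1) polar_coefficient[OF l \<omega>]
    by (simp add: c_def subfield_divide subfield_mult subfield_power)
  finally show ?thesis
    by (rule trace_subfield_k_eq_0)
qed

lemma chi_derivative_quadratic_plus:
  fixes g :: "'a \<Rightarrow> 'a"
  assumes g: "\<And>x. g x \<in> F2"
  shows "chi (trace n (\<mu> * x ^ (q + 1)) + g x) * chi (trace n (\<mu> * (x + e) ^ (q + 1)) + g (x + e))
       = chi (trace n (\<mu> * e ^ (q + 1))) * (chi (trace n (polar \<mu> e * x)) * (chi (g x) * chi (g (x + e))))"
proof -
  have "chi (trace n (\<mu> * x ^ (q + 1)) + g x) * chi (trace n (\<mu> * (x + e) ^ (q + 1)) + g (x + e))
      = chi ((trace n (\<mu> * (x + e) ^ (q + 1)) + trace n (\<mu> * x ^ (q + 1))) + (g x + g (x + e)))"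
    by (simp add: chi_add F2_add g trace_in_F2 add_ac mult.commute)
  also have "\<dots> = chi ((trace n (polar \<mu> e * x) + trace n (\<mu> * e ^ (q + 1))) + (g x + g (x + e)))"
    by (simp only: trace_quadratic_diff)
  finally show ?thesis
    by (simp add: chi_add F2_add g trace_in_F2 mult_ac)
qed

lemma bent_quadratic_plus:
  fixes g :: "'a \<Rightarrow> 'a"
  assumes l: "l \<in> subfield k" "l \<noteq> 0" and \<omega>: "\<omega> \<in> unit_circle k" "\<omega> \<noteq> 1"
    and u: "u \<in> subfield (2 * k)" and g: "\<And>x. g x \<in> F2"
    and span: "in_character_span (scalar_line u) (\<lambda>x. chi (g x))"
  shows "is_bent n (\<lambda>x. trace n (l * \<omega> * x ^ (q + 1)) + g x)"
proof (rule bent_if_derivatives_balanced)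
  show "trace n (l * \<omega> * x ^ (q + 1)) + g x \<in> F2" for x
    by (simp add: F2_add g trace_in_F2)
  fix e :: 'a
  assume "e \<noteq> 0"
  define w where "w = polar (l * \<omega>) e"
  have "w \<noteq> 0"
    using polar_eq_0_iff[OF l \<omega>] \<open>e \<noteq> 0\<close> by (simp add: w_def)
  \<comment> \<open>If \<open>w\<close> lies on the line, \<open>e\<close> is a period of \<open>g\<close>; otherwise the autocorrelation of \<open>g\<close>
    is spectrally supported on the line and hence orthogonal to the character of \<open>w\<close>.\<close>
  have "(\<Sum>x\<in>UNIV. chi (trace n (w * x)) * (chi (g x) * chi (g (x + e)))) = 0"
  proof (cases "w \<in> scalar_line u")
    case True
    then have "chi (g (x + e)) = chi (g x)" for x
      using trace_scalar_line_eq_0_if_polar_in_line[OF l \<omega> u] unfolding w_def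
      by (intro in_character_span_shift_invariant[OF span]) auto
    then show ?thesis
      using character_sum_eq_0[OF \<open>w \<noteq> 0\<close>] by simp
  next
    case False
    have "in_character_span (scalar_line u) (\<lambda>x. chi (g x) * chi (g (x + e)))"
      by (intro in_character_span_mult F2_subspace_scalar_line span in_character_span_shift[OF span])
    then show ?thesis
      by (rule in_character_span_orthogonal[OF F2_subspace_scalar_line _ False])
  qed
  moreover have "chi (trace n (l * \<omega> * x ^ (q + 1)) + g x) * chi (trace n (l * \<omega> * (x + e) ^ (q + 1)) + g (x + e))
      = chi (trace n (l * \<omega> * e ^ (q + 1))) * (chi (trace n (w * x)) * (chi (g x) * chi (g (x + e))))" for x
    unfolding w_def by (rule chi_derivative_quadratic_plus[OF g])
  ultimately show "(\<Sum>x\<in>UNIV. chi (trace n (l * \<omega> * x ^ (q + 1)) + g x)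
      * chi (trace n (l * \<omega> * (x + e) ^ (q + 1)) + g (x + e))) = 0"
    by (simp only: mult_zero_right flip: sum_distrib_left)
qed

lemma power_q_plus_1_F2_combination:
  assumes "\<And>i. \<beta> i \<in> F2"
  shows "(\<Sum>i<m. \<beta> i * b i) ^ (q + 1) = (\<Sum>i<m. \<Sum>j<m. (\<beta> i * \<beta> j) * (b i ^ q * (b j :: 'a)))"
proof -
  have "(\<Sum>i<m. \<beta> i * b i) ^ q = (\<Sum>i<m. \<beta> i * b i ^ q)"
    using assms by (simp add: power_two_power_sum power_mult_distrib F2_power_two_power)
  then have "(\<Sum>i<m. \<beta> i * b i) ^ (q + 1) = (\<Sum>i<m. \<beta> i * b i ^ q) * (\<Sum>j<m. \<beta> j * b j)"
    by (simp only: power_add power_one_right)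
  also have "\<dots> = (\<Sum>i<m. \<Sum>j<m. (\<beta> i * \<beta> j) * (b i ^ q * b j))"
    unfolding sum_product by (intro sum.cong refl) (simp add: mult_ac)
  finally show ?thesis .
qed

lemma degree_le_coord_trace4_quadratic:
  assumes C: "F2_basis k c (subfield k :: 'a set)"
  shows "degree_le 2 (\<lambda>x. coord k c j (trace4 k (\<omega> * x ^ (q + 1))))"
proof -
  obtain b where B: "F2_basis n b (UNIV :: 'a set)"
    using F2_basis_exists[of UNIV n] card_UNIV by (auto simp: F2_subspace_def)
  let ?\<beta> = "\<lambda>i x. coord n b i x"
  define T where "T i l = trace4 k (\<omega> * (b i ^ q * b l))" for i l
  have \<beta>: "?\<beta> i x * ?\<beta> l x \<in> subfield k" for i l x
    using F2_subset_subfield by (auto intro: F2_mult coord_in_F2)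
  have "coord k c j (trace4 k (\<omega> * x ^ (q + 1)))
      = (\<Sum>i<n. \<Sum>l<n. ?\<beta> i x * (?\<beta> l x * coord k c j (T i l)))" for x
  proof -
    have "x ^ (q + 1) = (\<Sum>i<n. ?\<beta> i x * b i) ^ (q + 1)"
      by (rule arg_cong[where f = "\<lambda>y. y ^ (q + 1)"]) (rule F2_basis_expansion[OF B UNIV_I])
    also have "\<dots> = (\<Sum>i<n. \<Sum>l<n. (?\<beta> i x * ?\<beta> l x) * (b i ^ q * b l))"
      by (rule power_q_plus_1_F2_combination) (rule coord_in_F2)
    finally have "\<omega> * x ^ (q + 1) = (\<Sum>i<n. \<Sum>l<n. (?\<beta> i x * ?\<beta> l x) * (\<omega> * (b i ^ q * b l)))"
      by (simp add: sum_distrib_left mult.left_commute)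
    then have "trace4 k (\<omega> * x ^ (q + 1)) = (\<Sum>i<n. \<Sum>l<n. (?\<beta> i x * ?\<beta> l x) * T i l)"
      by (simp add: trace4_sum trace4_mult_subfield[OF \<beta>] T_def)
    moreover have "(?\<beta> i x * ?\<beta> l x) * T i l \<in> subfield k" for i l
      using \<beta> trace4_in_subfield by (simp add: T_def subfield_mult)
    ultimately show ?thesis
      by (simp add: coord_sum[OF C] coord_mult_F2[OF C] coord_in_F2 F2_subspace_subfield
          sum_in_F2_subspace mult.assoc)
  qed
  moreover have "degree_le 2 (\<lambda>x. \<Sum>i<n. \<Sum>l<n. ?\<beta> i x * (?\<beta> l x * coord k c j (T i l)))"
    using additive_coord[OF B]
    by (intro degree_le_sum) (simp add: numeral_2_eq_2 degree_le.mult degree_le.const)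
  ultimately show ?thesis
    by simp
qed

lemma exists_coord_trace4_polar_eq_1:
  assumes C: "F2_basis k c (subfield k :: 'a set)" and j: "j < k"
    and \<omega>: "\<omega> \<in> unit_circle k" "\<omega> \<noteq> 1" and "e \<noteq> 0"
  shows "\<exists>a. coord k c j (trace4 k (\<omega> * (a ^ q * e + e ^ q * a))) = 1"
proof -
  define \<Phi> where "\<Phi> a = trace4 k (\<omega> * (a ^ q * e + e ^ q * a))" for a
  have "trace n (polar \<omega> e * a) = trace k (\<Phi> a)" for a
  proof -
    have "trace n (polar \<omega> e * a) = trace n (\<omega> ^ q ^ 3 * e ^ q ^ 3 * a) + trace n (\<omega> * e ^ q * a)"
      by (simp only: polar_def distrib_right trace_add)
    also have "trace n (\<omega> ^ q ^ 3 * e ^ q ^ 3 * a) = trace n (\<omega> * a ^ q * e)"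
      by (rule trace_shift_power_q[symmetric])
    also have "trace n (\<omega> * a ^ q * e) + trace n (\<omega> * e ^ q * a) = trace n (\<omega> * (a ^ q * e + e ^ q * a))"
      by (simp only: distrib_left trace_add mult.assoc)
    also have "\<dots> = trace k (1 * \<Phi> a)"
      using trace_trace4_eq_trace_n[of 1 "\<omega> * (a ^ q * e + e ^ q * a)"] by (simp add: \<Phi>_def subfield_def)
    finally show ?thesis
      by simp
  qed
  moreover have "polar \<omega> e \<noteq> 0"
    using polar_eq_0_iff[of 1 \<omega> e] \<omega> \<open>e \<noteq> 0\<close> by (simp add: subfield_def)
  ultimately obtain a1 where "\<Phi> a1 \<noteq> 0"
    using exists_trace_eq_1 by (metis trace_0 zero_neq_one)
  define l where "l = c j / \<Phi> a1"
  have l: "l \<in> subfield k"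
    unfolding l_def \<Phi>_def by (intro subfield_divide F2_basis_vector_in[OF C j] trace4_in_subfield)
  have "\<Phi> (l * a1) = l * \<Phi> a1"
    using l by (simp add: \<Phi>_def power_mult_distrib subfield_k_iff algebra_simps
        flip: trace4_mult_subfield[OF l])
  also have "\<dots> = c j"
    using \<open>\<Phi> a1 \<noteq> 0\<close> by (simp add: l_def)
  finally show ?thesis
    using coord_basis_vector[OF C j] unfolding \<Phi>_def by metis
qed

end

section \<open>The construction\<close>

locale bent_construction = binary_field_4k field_type n k
  for field_type :: "'a::{field,finite} itself" and n k +
  fixes \<omega> u0 :: 'a and v :: "nat \<Rightarrow> 'a" and J :: "nat set" and S :: "nat set set"
  assumes omega: "\<omega> \<in> unit_circle k" "\<omega> \<noteq> 1"
    and u0: "u0 \<in> subfield (2 * k)" "u0 \<noteq> 0"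
    and v_in_line: "\<And>j. j \<in> J \<Longrightarrow> v j \<in> scalar_line u0"
    and finite_J: "finite J" and S_vars: "S \<subseteq> Pow J"
begin

text \<open>With \<open>J = {1..\<tau>}\<close> and \<open>v j = u (\<iota> j)\<close>, \<open>G\<close> is \<open>F(Tr(u_{i_1} x), \<dots>, Tr(u_{i_\<tau>} x))\<close>.\<close>

definition G :: "'a \<Rightarrow> 'a" where
  "G x = eval_rpoly S (\<lambda>j. trace n (v j * x))"

lemma G_in_F2: "G x \<in> F2"
  unfolding G_def eval_rpoly_def by (intro sum_in_F2 prod_in_F2 trace_in_F2) simp

lemma in_character_span_chi_G: "in_character_span (scalar_line u0) (\<lambda>x. chi (G x))"
  unfolding G_def using S_vars v_in_line
  by (intro in_character_span_chi_eval_rpoly F2_subspace_scalar_line trace_in_F2 in_subfield_n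
      in_character_span_character) auto

lemma vectorial_bent_trace4_plus_G: "vectorial_bent n k (\<lambda>x. trace4 k (\<omega> * x ^ (q + 1)) + G x)"
  unfolding vectorial_bent_def
proof (intro allI impI, elim conjE)
  fix l :: 'a
  assume l: "l \<in> subfield k" "l \<noteq> 0"
  have T: "trace k l \<in> F2"
    by (rule trace_in_F2[OF l(1)])
  have "in_character_span (scalar_line u0) (\<lambda>x. chi (trace k l * G x))"
    using T in_character_span_chi_G in_character_span_const[OF F2_subspace_scalar_line[unfolded F2_subspace_def, THEN conjunct1]]
    by (auto simp: F2_def)
  then have "is_bent n (\<lambda>x. trace n (l * \<omega> * x ^ (q + 1)) + trace k l * G x)"
    using T G_in_F2 by (intro bent_quadratic_plus[OF l omega u0(1)]) (auto intro: F2_mult)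
  moreover have "trace k (l * (trace4 k (\<omega> * x ^ (q + 1)) + G x))
      = trace n (l * \<omega> * x ^ (q + 1)) + trace k l * G x" for x
    using trace_trace4_eq_trace_n[OF l(1)] trace_mult_F2[OF G_in_F2]
    by (simp add: distrib_left trace_add mult.assoc)
  ultimately show "is_bent n (\<lambda>x. trace k (l * (trace4 k (\<omega> * x ^ (q + 1)) + G x)))"
    by simp
qed

lemma G_periodic: "G (x + u0 ^ q) = G x"
proof -
  have "trace n (v j * u0 ^ q) = 0" if j: "j \<in> J" for j
  proof -
    obtain t where t: "t \<in> subfield k" "v j = u0 * t"
      using v_in_line[OF j] by (auto simp: scalar_line_def)
    then have "v j * u0 ^ q = u0 ^ (q + 1) * t"
      by (simp add: algebra_simps)
    also have "\<dots> \<in> subfield k"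
      using norm_in_subfield[OF u0(1)] t(1) by (rule subfield_mult)
    finally show ?thesis
      by (rule trace_subfield_k_eq_0)
  qed
  then show ?thesis
    unfolding G_def eval_rpoly_def using S_vars
    by (intro sum.cong prod.cong refl) (auto simp: distrib_left trace_add)
qed

end

locale bent_construction_independent = bent_construction +
  assumes v_independent: "\<And>A. A \<subseteq> J \<Longrightarrow> A \<noteq> {} \<Longrightarrow> (\<Sum>j\<in>A. v j) \<noteq> 0"
    and two_le_rdeg: "2 \<le> rdeg S"
begin

lemma finite_S: "finite S"
  using S_vars finite_J by (meson finite_Pow_iff finite_subset)

lemma finite_monomial: "M \<in> S \<Longrightarrow> finite M"
  using S_vars finite_J by (meson PowD finite_subset subsetD)

lemma degree_le_G: "degree_le (rdeg S) G"
proof -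
  have "degree_le (rdeg S) (\<lambda>x. \<Sum>M\<in>S. \<Prod>j\<in>M. trace n (v j * x))"
  proof (rule degree_le_sum)
    fix M
    assume M: "M \<in> S"
    have "degree_le (card M) (\<lambda>x. \<Prod>j\<in>M. trace n (v j * x))"
      using finite_monomial[OF M]
      by (intro degree_le_prod_additive additive.intro) (simp_all add: distrib_left trace_add)
    then show "degree_le (rdeg S) (\<lambda>x. \<Prod>j\<in>M. trace n (v j * x))"
      using card_le_rdeg[OF finite_S M] by (rule degree_le_mono)
  qed
  then show ?thesis
    by (simp add: G_def [abs_def] eval_rpoly_def)
qed

lemma coord_H:
  assumes C: "F2_basis k c (subfield k :: 'a set)"
  shows "coord k c j (trace4 k (\<omega> * x ^ (q + 1)) + G x)
       = coord k c j (trace4 k (\<omega> * x ^ (q + 1))) + G x * coord k c j 1"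
proof -
  have "G x \<in> subfield k"
    using G_in_F2 F2_subset_subfield by blast
  then show ?thesis
    using coord_add[OF C trace4_in_subfield] coord_mult_F2[OF C G_in_F2[of x], of j 1] by simp
qed

lemma bool_alg_degree_coord_H_le:
  assumes C: "F2_basis k c (subfield k :: 'a set)"
  shows "bool_alg_degree n (\<lambda>x. coord k c j (trace4 k (\<omega> * x ^ (q + 1)) + G x)) \<le> rdeg S"
proof (rule bool_alg_degree_le)
  have "degree_le (rdeg S) (\<lambda>x. coord k c j (trace4 k (\<omega> * x ^ (q + 1))) + coord k c j 1 * G x)"
    using degree_le_mono[OF degree_le_coord_trace4_quadratic[OF C] two_le_rdeg] degree_le_scale[OF degree_le_G]
    by (rule degree_le.add)
  then show "degree_le (rdeg S) (\<lambda>x. coord k c j (trace4 k (\<omega> * x ^ (q + 1)) + G x))"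
    unfolding coord_H[OF C] by (simp add: mult.commute)
qed (rule coord_in_F2)

lemma two_le_bool_alg_degree_coord_H:
  assumes C: "F2_basis k c (subfield k :: 'a set)" and j: "j < k" "coord k c j 1 = 1"
  shows "2 \<le> bool_alg_degree n (\<lambda>x. coord k c j (trace4 k (\<omega> * x ^ (q + 1)) + G x))"
proof -
  define A where "A x = coord k c j (trace4 k (\<omega> * x ^ (q + 1)))" for x
  have H: "(\<lambda>x. coord k c j (trace4 k (\<omega> * x ^ (q + 1)) + G x)) = (\<lambda>x. A x + G x)"
    using coord_H[OF C] j(2) by (simp add: A_def)
  \<comment> \<open>\<open>e\<close> is a period of \<open>G\<close>, so the second derivative in directions \<open>e\<close>, \<open>a\<close> only sees \<open>A\<close>.\<close>
  define e where "e = u0 ^ q"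
  have "e \<noteq> 0"
    using u0(2) by (simp add: e_def)
  obtain a where a: "coord k c j (trace4 k (\<omega> * (a ^ q * e + e ^ q * a))) = 1"
    using exists_coord_trace4_polar_eq_1[OF C j(1) omega \<open>e \<noteq> 0\<close>] by blast
  define d where "d i = (if i = 0 then e else a)" for i :: nat
  have "(a + e) ^ (q + 1) + a ^ (q + 1) + e ^ (q + 1) = a ^ q * e + e ^ q * a"
    by (simp only: power_q_plus_1_add) (simp add: add.commute add.left_commute)
  then have "trace4 k (\<omega> * (a + e) ^ (q + 1)) + trace4 k (\<omega> * a ^ (q + 1)) + trace4 k (\<omega> * e ^ (q + 1))
      = trace4 k (\<omega> * (a ^ q * e + e ^ q * a))"
    by (metis distrib_left trace4_add)
  have "A (a + e) + (A a + A e) = coord k c j (trace4 k (\<omega> * (a + e) ^ (q + 1))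
      + (trace4 k (\<omega> * a ^ (q + 1)) + trace4 k (\<omega> * e ^ (q + 1))))"
    by (simp add: A_def coord_add[OF C] trace4_in_subfield subfield_add)
  also have "\<dots> = 1"
    using \<open>trace4 k _ + _ + _ = _\<close> a by (simp add: add.assoc)
  finally have "hderiv A {0, 1} d 0 = 1"
    by (simp add: hderiv_pair d_def A_def coord_0[OF C] power_0_left add.assoc)
  moreover have "hderiv G {0, 1} d 0 = 0"
    using G_periodic[of a] G_periodic[of 0] by (simp add: hderiv_pair d_def e_def)
  ultimately have "hderiv (\<lambda>x. A x + G x) {0, 1} d 0 \<noteq> 0"
    by (simp add: hderiv_add)
  moreover have "A x + G x \<in> F2" for x
    by (simp add: A_def F2_add coord_in_F2 G_in_F2)
  ultimately have "card {0::nat, 1} \<le> bool_alg_degree n (\<lambda>x. A x + G x)"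
    by (intro card_le_bool_alg_degree) auto
  then show ?thesis
    unfolding H by simp
qed

lemma exists_dual_points: "\<exists>a. \<forall>m\<in>J. \<forall>i\<in>J. trace n (v i * a m) = (if i = m then 1 else 0)"
proof -
  have "\<forall>m. \<exists>x. \<forall>i\<in>J. trace n (v i * x) = (if i = m then 1 else 0)"
    using finite_J v_independent by (intro allI exists_trace_values) auto
  then show ?thesis
    by metis
qed

text \<open>On the points \<open>\<Sum>m\<in>Y. a m\<close> the function \<open>G\<close> evaluates the reduced polynomial \<open>S\<close>
  at the indicator of \<open>Y\<close>, so this derivative is the coefficient of the monomial \<open>M0\<close>.\<close>

lemma hderiv_G_at_dual_points:
  assumes M0: "M0 \<in> S"
    and a: "\<And>m i. m \<in> J \<Longrightarrow> i \<in> J \<Longrightarrow> trace n (v i * a m) = (if i = m then 1 else 0)"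
  shows "hderiv G M0 a 0 = 1"
proof -
  have M0_J: "M0 \<subseteq> J"
    using M0 S_vars by auto
  have "G (\<Sum>m\<in>Y. a m) = (\<Sum>N\<in>S. if N \<subseteq> Y then 1 else 0)" if Y: "Y \<subseteq> M0" for Y
  proof -
    have "finite Y"
      using Y finite_monomial[OF M0] finite_subset by blast
    then have tr: "trace n (v i * (\<Sum>m\<in>Y. a m)) = (if i \<in> Y then 1 else 0)" if "i \<in> J" for i
      using a[OF _ that] Y M0_J by (simp add: sum_distrib_left trace_sum subset_iff cong: sum.cong)
    have "G (\<Sum>m\<in>Y. a m) = (\<Sum>N\<in>S. \<Prod>i\<in>N. if i \<in> Y then 1 else 0)"
      unfolding G_def eval_rpoly_def
    proof (intro sum.cong prod.cong refl)
      fix N i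
      assume "N \<in> S" "i \<in> N"
      then have "i \<in> J"
        using S_vars by blast
      then show "trace n (v i * (\<Sum>m\<in>Y. a m)) = (if i \<in> Y then 1 else 0)"
        by (rule tr)
    qed
    then show ?thesis
      by (simp add: prod_indicator finite_monomial)
  qed
  then have "hderiv G M0 a 0 = (\<Sum>Y\<in>Pow M0. \<Sum>N\<in>S. if N \<subseteq> Y then 1 else 0)"
    by (simp add: hderiv_def)
  also have "\<dots> = 1"
    using sum_Pow_count_subsets[OF finite_monomial[OF M0] finite_S] M0 by simp
  finally show ?thesis .
qed

lemma rdeg_le_bool_alg_degree_coord_H:
  assumes C: "F2_basis k c (subfield k :: 'a set)" and j: "coord k c j 1 = 1" and three: "3 \<le> rdeg S"
  shows "rdeg S \<le> bool_alg_degree n (\<lambda>x. coord k c j (trace4 k (\<omega> * x ^ (q + 1)) + G x))"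
proof -
  define A where "A x = coord k c j (trace4 k (\<omega> * x ^ (q + 1)))" for x
  have H: "(\<lambda>x. coord k c j (trace4 k (\<omega> * x ^ (q + 1)) + G x)) = (\<lambda>x. A x + G x)"
    using coord_H[OF C] j by (simp add: A_def)
  have "S \<noteq> {}"
    using three by (auto simp: rdeg_def)
  then have "rdeg S \<in> card ` S"
    using finite_S by (simp add: rdeg_def)
  then obtain M0 where M0: "M0 \<in> S" "card M0 = rdeg S"
    by auto
  obtain a where "\<And>m i. m \<in> J \<Longrightarrow> i \<in> J \<Longrightarrow> trace n (v i * a m) = (if i = m then 1 else 0)"
    using exists_dual_points by blast
  then have "hderiv G M0 a 0 = 1"
    by (rule hderiv_G_at_dual_points[OF M0(1)])
  moreover have "hderiv A M0 a 0 = 0"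
  proof (rule hderiv_eq_0_if_degree_le[OF finite_monomial[OF M0(1)]])
    show "degree_le 2 A"
      unfolding A_def by (rule degree_le_coord_trace4_quadratic[OF C])
  qed (use M0(2) three in simp)
  ultimately have "hderiv (\<lambda>x. A x + G x) M0 a 0 \<noteq> 0"
    by (simp add: hderiv_add)
  moreover have "A x + G x \<in> F2" for x
    by (simp add: A_def F2_add coord_in_F2 G_in_F2)
  ultimately have "card M0 \<le> bool_alg_degree n (\<lambda>x. A x + G x)"
    using finite_monomial[OF M0(1)] by (intro card_le_bool_alg_degree) auto
  then show ?thesis
    unfolding H by (simp add: M0(2))
qed

lemma vec_alg_degree_trace4_plus_G: "vec_alg_degree n k (\<lambda>x. trace4 k (\<omega> * x ^ (q + 1)) + G x) = rdeg S"
proof -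
  define c where "c = (SOME c. F2_basis k c (subfield k :: 'a set))"
  have C: "F2_basis k c (subfield k :: 'a set)"
    unfolding c_def using subfield_k_basis_exists by (rule someI_ex)
  have "\<exists>j<k. coord k c j 1 = 1"
    by (rule exists_coord_eq_1[OF C]) (simp_all add: subfield_def)
  then obtain j0 where j0: "j0 < k" "coord k c j0 1 = 1"
    by blast
  let ?g = "\<lambda>j. bool_alg_degree n (\<lambda>x. coord k c j (trace4 k (\<omega> * x ^ (q + 1)) + G x))"
  have "rdeg S \<le> ?g j0"
  proof (cases "rdeg S = 2")
    case True
    then show ?thesis
      using two_le_bool_alg_degree_coord_H[OF C j0] by simp
  next
    case False
    then show ?thesis
      using rdeg_le_bool_alg_degree_coord_H[OF C j0(2)] two_le_rdeg by simp
  qed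
  moreover have "?g j \<le> rdeg S" for j
    by (rule bool_alg_degree_coord_H_le[OF C])
  ultimately have "Max (?g ` {..<k}) = rdeg S"
    using j0(1) by (intro antisym Max.boundedI Max_ge_iff[THEN iffD2]) auto
  then show ?thesis
    by (simp add: vec_alg_degree_def c_def [symmetric])
qed

end

theorem theorem7:
  fixes k \<tau> d :: nat and u :: "nat \<Rightarrow> 'a::{field,finite}" and S :: "nat set set"
    and \<omega> :: 'a and \<iota> :: "nat \<Rightarrow> nat" and H :: "'a \<Rightarrow> 'a"
  assumes card: "card (UNIV :: 'a set) = 2 ^ (4 * k)"
    and k2: "k \<ge> 2"
    and tau: "1 \<le> \<tau>" "\<tau> \<le> k"
    and u_nz: "\<forall>i\<in>{1..k}. u i \<in> subfield (2 * k) \<and> u i \<noteq> 0"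
    and u_rel: "\<forall>i j. 1 \<le> i \<and> i < j \<and> j \<le> k \<longrightarrow>
                   u i * u j ^ (2 ^ k) \<in> subfield k \<and> u i * u j ^ (2 ^ k) \<noteq> 0"
    and F: "S \<subseteq> Pow {1..\<tau>}" "rdeg S = d"
    and gen: "\<omega> \<in> unit_circle k" "unit_circle k \<subseteq> range (\<lambda>m::nat. \<omega> ^ m)"
    and idx: "inj_on \<iota> {1..\<tau>}" "\<iota> ` {1..\<tau>} \<subseteq> {1..k}"
    and H: "H = (\<lambda>x. trace4 k (\<omega> * x ^ (2 ^ k + 1))
                     + eval_rpoly S (\<lambda>j. trace (4 * k) (u (\<iota> j) * x)))"
  shows "vectorial_bent (4 * k) k H \<and>
         (lin_indep_F2 u {1..k} \<and> d \<ge> 2 \<longrightarrow> vec_alg_degree (4 * k) k H = d)"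
proof -
  interpret binary_field_4k "TYPE('a)" "4 * k" k
    using card k2 by unfold_locales simp_all
  have u1: "u 1 \<in> subfield (2 * k)" "u 1 \<noteq> 0"
    using u_nz k2 by auto
  have line: "u i \<in> scalar_line (u 1)" if "i \<in> {1..k}" for i
    using that u_nz u_rel[rule_format, of 1 i] in_scalar_line_self[of "u 1"]
    by (cases "i = 1") (auto intro: in_scalar_line_if_norm_relation)
  then have v_line: "u (\<iota> j) \<in> scalar_line (u 1)" if "j \<in> {1..\<tau>}" for j
    using idx(2) that by blast
  interpret bent_construction "TYPE('a)" "4 * k" k \<omega> "u 1" "\<lambda>j. u (\<iota> j)" "{1..\<tau>}" S
    using gen generator_ne_1[OF gen] u1 F(1) v_line by unfold_locales auto
  have H_eq: "H = (\<lambda>x. trace4 k (\<omega> * x ^ (q + 1)) + G x)"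
    by (simp add: H G_def)
  have "vec_alg_degree (4 * k) k H = d" if "lin_indep_F2 u {1..k}" and "2 \<le> d"
  proof -
    interpret bent_construction_independent "TYPE('a)" "4 * k" k \<omega> "u 1" "\<lambda>j. u (\<iota> j)" "{1..\<tau>}" S
      using lin_indep_F2_reindex[OF that(1) idx] that(2) F(2) by unfold_locales auto
    show ?thesis
      using vec_alg_degree_trace4_plus_G F(2) by (simp add: H_eq)
  qed
  then show ?thesis
    using vectorial_bent_trace4_plus_G by (simp add: H_eq)
qed

end
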